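(* Let $0<\gamma<1$, $\Omega=(a,b)\times(c,d)$, $u\in C^6([a,b]\times[c,d])$, and let $u_Q$ be its tensor-product piecewise quadratic interpolant (see context). Then there is a constant $C$, depending on $u,\gamma,a,b,c,d$ but not on $M_x,M_y,i,j$, such that for all $M_x,M_y\ge2$, $i\in\{1,\dots,2M_x-1\}$, $j\in\{1,\dots,2M_y-1\}$, $$\left|\int_c^d\!\!\int_a^b\frac{u(x,y)-u_Q(x,y)}{\big((x_{i/2}-x)^2+(y_{j/2}-y)^2\big)^{\gamma/2}}\,dx\,dy\right|\le C\Big(h_x^4\eta_{i/2}^{-\gamma}+h_y^4\tilde\eta_{j/2}^{-\gamma}+h_x^{5-\gamma}+h_y^{5-\gamma}\Big),$$ where $\eta_{i/2}=\min\{x_{i/2}-a,\,b-x_{i/2}\}$ and $\tilde\eta_{j/2}=\min\{y_{j/2}-c,\,d-y_{j/2}\}$.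
   Context: Let $a<b$, $c<d$, $M_x,M_y\ge2$ integers, $h_x=(b-a)/M_x$, $h_y=(d-c)/M_y$, $x_s=a+sh_x$ ($s\in\{0,\tfrac12,\dots,M_x\}$), $y_s=c+sh_y$ ($s\in\{0,\tfrac12,\dots,M_y\}$). On $[a,b]$ the piecewise quadratic Lagrange basis $\phi_s(x)$ is: for integers $0\le l\le M_x$, $\phi_l(x)=\frac{x-x_{l-1}}{h_x}\cdot\frac{2x-(x_l+x_{l-1})}{h_x}$ on $[x_{l-1},x_l]\cap[a,b]$, $\phi_l(x)=\frac{x_{l+1}-x}{h_x}\cdot\frac{(x_{l+1}+x_l)-2x}{h_x}$ on $[x_l,x_{l+1}]\cap[a,b]$, $0$ otherwise; for $l=1,\dots,M_x$, $\phi_{l-\frac12}(x)=\frac{4(x-x_{l-1})(x_l-x)}{h_x^2}$ on $[x_{l-1},x_l]$, $0$ otherwise. The basis $\phi_s(y)$ on $[c,d]$ is defined analogously with $y_s,h_y,M_y$. The interpolant is $$u_Q(x,y)=\sum_{l=0}^{2M_x}\sum_{r=0}^{2M_y}\phi_{l/2}(x)\phi_{r/2}(y)\,u(x_{l/2},y_{r/2}).$$ *)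

theory Defs
  imports "HOL-Analysis.Analysis"
begin

text \<open>C^k regularity on a closed set S of the plane: all iterated partial derivatives
  up to order k exist (taken within S, i.e. one-sided at the boundary of a rectangle)
  and are continuous on S.\<close>
fun smooth2_on :: "nat \<Rightarrow> (real \<times> real) set \<Rightarrow> (real \<Rightarrow> real \<Rightarrow> real) \<Rightarrow> bool" where
  "smooth2_on 0 S f = continuous_on S (\<lambda>p. f (fst p) (snd p))"
| "smooth2_on (Suc k) S f =
     (continuous_on S (\<lambda>p. f (fst p) (snd p)) \<and>
      (\<exists>fx fy.
        (\<forall>x y. (x, y) \<in> S \<longrightarrow>
           ((\<lambda>t. f t y) has_real_derivative fx x y) (at x within {t. (t, y) \<in> S}) \<and>
           ((\<lambda>t. f x t) has_real_derivative fy x y) (at y within {t. (x, t) \<in> S})) \<and>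
        smooth2_on k S fx \<and> smooth2_on k S fy))"

definition node :: "real \<Rightarrow> real \<Rightarrow> real \<Rightarrow> real" where
  "node a h t = a + t * h"

definition phi_int :: "real \<Rightarrow> real \<Rightarrow> real \<Rightarrow> nat \<Rightarrow> real \<Rightarrow> real" where
  "phi_int a b h l x =
     (let xm = node a h (real l - 1); xl = node a h (real l); xp = node a h (real l + 1) in
      if x \<in> {a..b} \<inter> {xm..xl} then ((x - xm) / h) * ((2 * x - (xl + xm)) / h)
      else if x \<in> {a..b} \<inter> {xl..xp} then ((xp - x) / h) * (((xp + xl) - 2 * x) / h)
      else 0)"

text \<open>Midpoint basis function phi_{l-1/2}, l \<ge> 1.\<close>
definition phi_half :: "real \<Rightarrow> real \<Rightarrow> nat \<Rightarrow> real \<Rightarrow> real" where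
  "phi_half a h l x =
     (let xm = node a h (real l - 1); xl = node a h (real l) in
      if x \<in> {xm..xl} then 4 * (x - xm) * (xl - x) / h\<^sup>2 else 0)"

text \<open>phiQ a b M k = phi_{k/2} on [a,b] with M intervals.\<close>
definition phiQ :: "real \<Rightarrow> real \<Rightarrow> nat \<Rightarrow> nat \<Rightarrow> real \<Rightarrow> real" where
  "phiQ a b M k x =
     (let h = (b - a) / real M in
      if even k then phi_int a b h (k div 2) x else phi_half a h ((k + 1) div 2) x)"

definition uQ :: "(real \<Rightarrow> real \<Rightarrow> real) \<Rightarrow> real \<Rightarrow> real \<Rightarrow> real \<Rightarrow> real \<Rightarrow> nat \<Rightarrow> nat \<Rightarrow> real \<Rightarrow> real \<Rightarrow> real" where
  "uQ u a b c d Mx My x y =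
     (\<Sum>l = 0..2 * Mx. \<Sum>r = 0..2 * My.
        phiQ a b Mx l x * phiQ c d My r y *
        u (node a ((b - a) / real Mx) (real l / 2)) (node c ((d - c) / real My) (real r / 2)))"

end

theory Submission
  imports Defs
begin

(* The interpolation error is split as u - uQ = (u - I_y u) + I_y (u - I_x u), where I_x, I_y
   interpolate in one variable only. This reduces everything to integrals along lines of
   g - I g against the weight t -> ((t0 - t)^2 + s^2) powr (-gamma/2), s being the distance
   to the singular point in the other variable. On an element of length h the error of a
   C^4 function g is a cubic with mean zero plus O(h^4); the cubic only meets the
   oscillation of the weight over the element, and since the weight is unimodal with
   maximum |s| powr -gamma these oscillations add up to at most 2 |s| powr -gamma. So a
   line integral is O(h^4 |s| powr -gamma), and integrating |s| powr -gamma (gamma < 1)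
   over the other variable gives the uniform bound C (hx^4 + hy^4), which implies the claim
   because eta and eta' are at most half the side lengths. Exchanging the order of
   integration for the singular weight is justified by regularisation and dominated
   convergence. *)

section \<open>Quadratic interpolation on a uniform grid\<close>

definition shape0 :: "real \<Rightarrow> real" where "shape0 s = (1 - s) * (1 - 2 * s)"
definition shape_half :: "real \<Rightarrow> real" where "shape_half s = 4 * s * (1 - s)"
definition shape1 :: "real \<Rightarrow> real" where "shape1 s = s * (2 * s - 1)"

lemma phi_int_scaled:
  assumes "h > 0" and "a + \<tau> * h \<in> {a..b}"
  shows "phi_int a b h j (a + \<tau> * h) =
    (if \<tau> \<in> {real j - 1 .. real j} then (\<tau> - real j + 1) * (2 * \<tau> - 2 * real j + 1)
     else if \<tau> \<in> {real j .. real j + 1} then (real j + 1 - \<tau>) * (2 * real j + 1 - 2 * \<tau>) else 0)"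
proof -
  have "a + \<tau> * h \<in> {a + r * h .. a + r' * h} \<longleftrightarrow> \<tau> \<in> {r..r'}" for r r'
    using assms(1) by auto
  from this[of "real j - 1" "real j"] this[of "real j" "real j + 1"] show ?thesis
    using assms unfolding phi_int_def node_def Let_def by (auto simp: field_simps)
qed

lemma phi_half_scaled:
  assumes "h > 0"
  shows "phi_half a h j (a + \<tau> * h) =
    (if \<tau> \<in> {real j - 1 .. real j} then 4 * (\<tau> - real j + 1) * (real j - \<tau>) else 0)"
proof -
  have "a + \<tau> * h \<in> {a + r * h .. a + r' * h} \<longleftrightarrow> \<tau> \<in> {r..r'}" for r r'
    using assms by auto
  from this[of "real j - 1" "real j"] show ?thesis
    using assms unfolding phi_half_def node_def Let_def by (auto simp: field_simps power2_eq_square)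
qed

lemma phi_int_on_element:
  assumes h: "h > 0" and in_ab: "a + (real l + s) * h \<in> {a..b}" and s: "0 \<le> s" "s \<le> 1"
  shows "phi_int a b h j (a + (real l + s) * h) = (if j = l then shape0 s else if j = l + 1 then shape1 s else 0)"
proof -
  consider "j = l" | "j = l + 1" | "real j + 1 \<le> real l" | "real l + 2 \<le> real j"
    by linarith
  then show ?thesis
  proof cases
    case 1
    then show ?thesis
      unfolding phi_int_scaled[OF h in_ab] using s by (cases "s = 0") (auto simp: shape0_def)
  next
    case 2
    then show ?thesis
      unfolding phi_int_scaled[OF h in_ab] using s by (auto simp: shape1_def algebra_simps)
  next
    case 3
    then have "\<not> real l + s \<le> real j" "real l + s \<in> {real j .. real j + 1} \<longrightarrow> s = 0 \<and> real l = real j + 1"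
      using s by auto
    with 3 show ?thesis unfolding phi_int_scaled[OF h in_ab] by auto
  next
    case 4
    then have "real l + s \<in> {real j - 1 .. real j} \<longrightarrow> s = 1 \<and> real l + 2 = real j" "\<not> real j \<le> real l + s"
      using s by auto
    with 4 show ?thesis unfolding phi_int_scaled[OF h in_ab] by auto
  qed
qed

lemma phiQ_on_element:
  assumes "a < b" and "l < M" and h: "h = (b - a) / real M" and p: "p = a + real l * h"
    and t: "t \<in> {p .. p + h}"
  shows "phiQ a b M k t =
    (if k = 2 * l then shape0 ((t - p) / h) else if k = 2 * l + 1 then shape_half ((t - p) / h)
     else if k = 2 * l + 2 then shape1 ((t - p) / h) else 0)"
proof -
  define s where "s = (t - p) / h"
  have h0: "h > 0" using assms by simp
  have s: "0 \<le> s" "s \<le> 1" using t h0 by (auto simp: s_def divide_simps)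
  have ts: "t = a + (real l + s) * h" using h0 by (simp add: s_def p field_simps)
  have "(real l + s) * h \<le> real M * h"
    using assms s h0 by (intro mult_right_mono) auto
  then have in_ab: "a + (real l + s) * h \<in> {a..b}"
    using assms s h0 by simp
  have "phiQ a b M k (a + (real l + s) * h) =
      (if k = 2 * l then shape0 s else if k = 2 * l + 1 then shape_half s
       else if k = 2 * l + 2 then shape1 s else 0)"
  proof (cases "even k")
    case True
    then obtain j where "k = 2 * j" by blast
    then show ?thesis
      using phi_int_on_element[OF h0 in_ab s, of j] by (simp add: phiQ_def h)
  next
    case False
    then obtain j where k: "k = 2 * j + 1" by (metis oddE)
    then have "phiQ a b M k (a + (real l + s) * h) = phi_half a h (j + 1) (a + (real l + s) * h)"
      by (simp add: phiQ_def h)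
    with k s show ?thesis
      unfolding phi_half_scaled[OF h0] by (auto simp: shape_half_def)
  qed
  from this[folded ts] show ?thesis by (simp add: s_def)
qed

lemma sum_atLeast0AtMost_three:
  fixes f :: "nat \<Rightarrow> 'a::comm_monoid_add"
  assumes "i + 2 \<le> n" and "\<And>k. k \<le> n \<Longrightarrow> k \<notin> {i, i + 1, i + 2} \<Longrightarrow> f k = 0"
  shows "(\<Sum>k = 0..n. f k) = f i + f (i + 1) + f (i + 2)"
proof -
  have "(\<Sum>k = 0..n. f k) = (\<Sum>k \<in> {i, i + 1, i + 2}. f k)"
    by (rule sum.mono_neutral_right) (use assms in auto)
  then show ?thesis by (simp add: add.assoc)
qed

definition quad_interp :: "real \<Rightarrow> real \<Rightarrow> nat \<Rightarrow> (real \<Rightarrow> real) \<Rightarrow> real \<Rightarrow> real" where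
  "quad_interp a b M g t = (\<Sum>k = 0..2 * M. phiQ a b M k t * g (node a ((b - a) / real M) (real k / 2)))"

definition local_quad_interp :: "(real \<Rightarrow> real) \<Rightarrow> real \<Rightarrow> real \<Rightarrow> real \<Rightarrow> real" where
  "local_quad_interp g p h t =
     g p * shape0 ((t - p) / h) + g (p + h / 2) * shape_half ((t - p) / h) + g (p + h) * shape1 ((t - p) / h)"

lemma element_subset:
  assumes "\<alpha> < \<beta>" and "l < M" and "h = (\<beta> - \<alpha>) / real M"
  shows "{\<alpha> + real l * h .. \<alpha> + real l * h + h} \<subseteq> {\<alpha>..\<beta>}"
proof -
  have "h > 0" and "real M * h = \<beta> - \<alpha>" using assms by auto
  moreover have "real (Suc l) * h \<le> real M * h" using assms(2) \<open>h > 0\<close> by (intro mult_right_mono) auto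
  ultimately show ?thesis by (auto simp: algebra_simps)
qed

lemma elements_cover:
  assumes "a < b" and "0 < M" and h: "h = (b - a) / real M"
  shows "{a..b} = (\<Union>l<M. {a + real l * h .. a + real l * h + h})"
proof
  show "{a..b} \<subseteq> (\<Union>l<M. {a + real l * h .. a + real l * h + h})"
  proof
    fix t assume t: "t \<in> {a..b}"
    have "h > 0" and Mh: "real M * h = b - a" using assms by auto
    define l where "l = min (nat \<lfloor>(t - a) / h\<rfloor>) (M - 1)"
    have "(t - a) / h \<le> real M" using t \<open>h > 0\<close> Mh by (simp add: divide_simps mult.commute)
    then have "real l \<le> (t - a) / h" "(t - a) / h \<le> real l + 1" "l < M"
      using t \<open>h > 0\<close> assms(2) unfolding l_def by (auto simp: min_def of_nat_diff) linarith+
    then show "t \<in> (\<Union>l<M. {a + real l * h .. a + real l * h + h})"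
      using \<open>h > 0\<close> by (auto simp: field_simps intro!: bexI[of _ l])
  qed
  show "(\<Union>l<M. {a + real l * h .. a + real l * h + h}) \<subseteq> {a..b}"
    using element_subset[OF assms(1) _ h] by blast
qed

lemma quad_interp_on_element:
  assumes "a < b" and "l < M" and h: "h = (b - a) / real M" and p: "p = a + real l * h"
    and t: "t \<in> {p .. p + h}"
  shows "quad_interp a b M g t = local_quad_interp g p h t"
proof -
  have nodes: "node a ((b - a) / real M) (real (2 * l) / 2) = p"
    "node a ((b - a) / real M) (real (2 * l + 1) / 2) = p + h / 2"
    "node a ((b - a) / real M) (real (2 * l + 2) / 2) = p + h"
    using \<open>l < M\<close> by (simp_all add: node_def h p field_simps)
  have "quad_interp a b M g t = (\<Sum>k = 0..2 * M. phiQ a b M k t * g (node a ((b - a) / real M) (real k / 2)))"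
    by (simp add: quad_interp_def)
  also have "\<dots> = phiQ a b M (2 * l) t * g (node a ((b - a) / real M) (real (2 * l) / 2))
      + phiQ a b M (2 * l + 1) t * g (node a ((b - a) / real M) (real (2 * l + 1) / 2))
      + phiQ a b M (2 * l + 2) t * g (node a ((b - a) / real M) (real (2 * l + 2) / 2))"
    using \<open>l < M\<close> by (intro sum_atLeast0AtMost_three) (auto simp: phiQ_on_element[OF assms])
  also have "\<dots> = local_quad_interp g p h t"
    unfolding nodes by (simp add: phiQ_on_element[OF assms] local_quad_interp_def)
  finally show ?thesis .
qed

lemma abs_shapes_le_1:
  assumes "0 \<le> s" "s \<le> 1"
  shows "\<bar>shape0 s\<bar> \<le> 1" "\<bar>shape_half s\<bar> \<le> 1" "\<bar>shape1 s\<bar> \<le> 1"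
proof -
  have "\<bar>1 - s\<bar> \<le> 1" "\<bar>1 - 2 * s\<bar> \<le> 1" "\<bar>s\<bar> \<le> 1" "\<bar>2 * s - 1\<bar> \<le> 1"
    using assms by auto
  then show "\<bar>shape0 s\<bar> \<le> 1" "\<bar>shape1 s\<bar> \<le> 1"
    unfolding shape0_def shape1_def abs_mult by (simp_all add: mult_le_one)
  have "4 * s * (1 - s) = 1 - (2 * s - 1)\<^sup>2" by algebra
  moreover have "0 \<le> 4 * s * (1 - s)" using assms by simp
  ultimately show "\<bar>shape_half s\<bar> \<le> 1" unfolding shape_half_def by simp
qed

lemma sum_abs_phiQ_le_3:
  assumes "a < b" and "0 < M" and t: "t \<in> {a..b}"
  shows "(\<Sum>k = 0..2 * M. \<bar>phiQ a b M k t\<bar>) \<le> 3"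
proof -
  define h where "h = (b - a) / real M"
  obtain l where l: "l < M" and t_el: "t \<in> {a + real l * h .. a + real l * h + h}"
    using t elements_cover[OF assms(1,2) h_def] by auto
  note phi = phiQ_on_element[OF assms(1) l h_def refl t_el]
  have s: "0 \<le> (t - (a + real l * h)) / h" "(t - (a + real l * h)) / h \<le> 1"
    using t_el assms by (auto simp: h_def divide_simps)
  have "(\<Sum>k = 0..2 * M. \<bar>phiQ a b M k t\<bar>) =
      \<bar>phiQ a b M (2 * l) t\<bar> + \<bar>phiQ a b M (2 * l + 1) t\<bar> + \<bar>phiQ a b M (2 * l + 2) t\<bar>"
    using l by (intro sum_atLeast0AtMost_three) (auto simp: phi)
  also have "\<dots> \<le> 3"
    using abs_shapes_le_1[OF s] by (simp add: phi)
  finally show ?thesis .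
qed

lemma continuous_on_phiQ:
  assumes "a < b" and "0 < M"
  shows "continuous_on {a..b} (phiQ a b M k)"
proof -
  define h where "h = (b - a) / real M"
  have h: "h > 0" using assms by (simp add: h_def)
  have "continuous_on (\<Union>l<M. {a + real l * h .. a + real l * h + h}) (phiQ a b M k)"
  proof (rule continuous_on_closed_Union)
    fix l assume "l \<in> {..<M}"
    then have l: "l < M" by simp
    define p where "p = a + real l * h"
    have "continuous_on {p .. p + h}
      (\<lambda>t. if k = 2 * l then shape0 ((t - p) / h) else if k = 2 * l + 1 then shape_half ((t - p) / h)
            else if k = 2 * l + 2 then shape1 ((t - p) / h) else 0)"
      unfolding shape0_def shape_half_def shape1_def
      using h by (cases "k = 2 * l"; cases "k = 2 * l + 1"; cases "k = 2 * l + 2") (auto intro!: continuous_intros)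
    then show "continuous_on {p .. p + h} (phiQ a b M k)"
      by (rule continuous_on_eq) (simp add: phiQ_on_element[OF assms(1) l h_def p_def])
  qed auto
  then show ?thesis using elements_cover[OF assms h_def] by simp
qed

section \<open>The error on one element\<close>

lemma taylor_remainder_bound:
  fixes D :: "nat \<Rightarrow> real \<Rightarrow> real"
  assumes "0 < n"
    and D: "\<And>m t. m < n \<Longrightarrow> t \<in> {p..q} \<Longrightarrow> (D m has_real_derivative D (Suc m) t) (at t within {p..q})"
    and B: "\<And>t. t \<in> {p..q} \<Longrightarrow> \<bar>D n t\<bar> \<le> B"
    and x: "x \<in> {p..q}"
  shows "\<bar>D 0 x - (\<Sum>m<n. D m p / fact m * (x - p) ^ m)\<bar> \<le> B * (x - p) ^ n / fact (n - 1)"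
proof -
  define R where "R t = ((x - t) ^ (n - 1) / fact (n - 1)) *\<^sub>R D n t" for t
  have D': "(D m has_vector_derivative D (Suc m) t) (at t within {p..x})"
    if "m < n" "p \<le> t" "t \<le> x" for m t
    using D[of m t] that x
    by (auto simp: has_real_derivative_iff_has_vector_derivative[symmetric]
        intro: has_field_derivative_subset)
  have px: "p \<le> x" using x by simp
  have R: "(R has_integral D 0 x - (\<Sum>m<n. ((x - p) ^ m / fact m) *\<^sub>R D m p)) {p..x}"
    unfolding R_def by (rule Taylor_has_integral[where Df = D and f = "D 0", OF assms(1) refl D' px])
  have R_bound: "norm (R t) \<le> B * (x - p) ^ (n - 1) / fact (n - 1)" if "t \<in> {p..x} - {}" for t
  proof -
    have "(x - t) ^ (n - 1) \<le> (x - p) ^ (n - 1)"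
      using that by (intro power_mono) auto
    moreover have "\<bar>D n t\<bar> \<le> B" using B that x by simp
    ultimately show ?thesis
      using that by (auto simp: R_def abs_mult mult.commute intro!: divide_right_mono mult_mono)
  qed
  have "0 \<le> B" using B[of p] x by auto
  then have "norm (D 0 x - (\<Sum>m<n. ((x - p) ^ m / fact m) *\<^sub>R D m p))
      \<le> B * (x - p) ^ (n - 1) / fact (n - 1) * (x - p)"
    using has_integral_bound_real[OF _ finite.emptyI R R_bound] px by simp
  also have "\<dots> = B * (x - p) ^ n / fact (n - 1)"
    using \<open>0 < n\<close> by (simp add: power_eq_if[of _ n])
  finally show ?thesis by (simp add: mult.commute)
qed

definition element_cubic :: "real \<Rightarrow> real \<Rightarrow> real \<Rightarrow> real" where
  "element_cubic p h t = (t - p) * (t - (p + h / 2)) * (t - (p + h))"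

lemma cubic_minus_local_quad_interp:
  fixes A :: "nat \<Rightarrow> real"
  assumes "h \<noteq> 0" and T: "T = (\<lambda>t. \<Sum>m<4. A m / fact m * (t - p) ^ m)"
  shows "T t - local_quad_interp T p h t = A 3 / 6 * element_cubic p h t"
  using assms(1)
  by (simp add: T eval_nat_numeral local_quad_interp_def element_cubic_def
      shape0_def shape_half_def shape1_def field_simps)

lemma abs_sub_local_quad_interp_le:
  assumes "h > 0" and t: "t \<in> {p..p + h}" and B: "\<And>s. s \<in> {p..p + h} \<Longrightarrow> \<bar>g s\<bar> \<le> B"
  shows "\<bar>g t - local_quad_interp g p h t\<bar> \<le> 4 * B"
proof -
  define s where "s = (t - p) / h"
  have s: "0 \<le> s" "s \<le> 1" using t \<open>h > 0\<close> by (auto simp: s_def divide_simps)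
  have nodes: "p \<in> {p..p + h}" "p + h / 2 \<in> {p..p + h}" "p + h \<in> {p..p + h}"
    using \<open>h > 0\<close> by auto
  have node_term: "\<bar>g x\<bar> * \<bar>S\<bar> \<le> B" if "x \<in> {p..p + h}" "\<bar>S\<bar> \<le> 1" for x S
    using mult_right_le_one_le[of "\<bar>g x\<bar>" "\<bar>S\<bar>"] B[OF that(1)] that(2) by simp
  have "\<bar>g t - local_quad_interp g p h t\<bar>
      \<le> \<bar>g t\<bar> + \<bar>g p\<bar> * \<bar>shape0 s\<bar> + \<bar>g (p + h / 2)\<bar> * \<bar>shape_half s\<bar> + \<bar>g (p + h)\<bar> * \<bar>shape1 s\<bar>"
    unfolding local_quad_interp_def s_def[symmetric] abs_mult[symmetric] by linarith
  also have "\<dots> \<le> 4 * B"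
    using B[OF t] abs_shapes_le_1[OF s] node_term[OF nodes(1), of "shape0 s"]
      node_term[OF nodes(2), of "shape_half s"] node_term[OF nodes(3), of "shape1 s"]
    by linarith
  finally show ?thesis .
qed

lemma local_quad_interp_error:
  fixes D :: "nat \<Rightarrow> real \<Rightarrow> real"
  assumes "h > 0"
    and D: "\<And>m t. m < 4 \<Longrightarrow> t \<in> {p..p + h} \<Longrightarrow> (D m has_real_derivative D (Suc m) t) (at t within {p..p + h})"
    and M4: "\<And>t. t \<in> {p..p + h} \<Longrightarrow> \<bar>D 4 t\<bar> \<le> M4"
    and t: "t \<in> {p..p + h}"
  shows "\<bar>D 0 t - local_quad_interp (D 0) p h t - D 3 p / 6 * element_cubic p h t\<bar> \<le> M4 * h ^ 4"
proof -
  define T where "T s = (\<Sum>m<4. D m p / fact m * (s - p) ^ m)" for s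
  define R where "R s = D 0 s - T s" for s
  have R_bound: "\<bar>R s\<bar> \<le> M4 * h ^ 4 / 6" if "s \<in> {p..p + h}" for s
  proof -
    have "\<bar>R s\<bar> \<le> M4 * (s - p) ^ 4 / fact 3"
      unfolding R_def T_def using taylor_remainder_bound[of 4 p "p + h" D M4 s] D M4 that by simp
    also have "\<dots> \<le> M4 * h ^ 4 / 6"
      using that M4[of p] \<open>h > 0\<close> by (auto intro!: mult_left_mono power_mono simp: fact_numeral)
    finally show ?thesis .
  qed
  have split: "D 0 t - local_quad_interp (D 0) p h t - D 3 p / 6 * element_cubic p h t
      = R t - local_quad_interp R p h t"
  proof -
    have "D 0 = (\<lambda>s. T s + R s)" by (simp add: R_def)
    then have "local_quad_interp (D 0) p h t = local_quad_interp T p h t + local_quad_interp R p h t"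
      by (simp add: local_quad_interp_def algebra_simps)
    moreover have "T t - local_quad_interp T p h t = D 3 p / 6 * element_cubic p h t"
      using \<open>h > 0\<close> by (intro cubic_minus_local_quad_interp) (auto simp: T_def)
    ultimately show ?thesis by (simp add: R_def)
  qed
  have "\<bar>R t - local_quad_interp R p h t\<bar> \<le> 4 * (M4 * h ^ 4 / 6)"
    by (rule abs_sub_local_quad_interp_le[OF \<open>h > 0\<close> t R_bound])
  also have "\<dots> \<le> M4 * h ^ 4"
    using M4[OF t] \<open>h > 0\<close> by simp
  finally show ?thesis unfolding split .
qed

lemma element_cubic_has_integral:
  assumes "0 \<le> h"
  shows "(element_cubic p h has_integral 0) {p..p + h}"
proof -
  define G where "G t = (t - (p + h / 2)) ^ 4 / 4 - h\<^sup>2 * (t - (p + h / 2))\<^sup>2 / 8" for t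
  have "(element_cubic p h has_integral G (p + h) - G p) {p..p + h}"
  proof (rule fundamental_theorem_of_calculus)
    fix t
    show "(G has_vector_derivative element_cubic p h t) (at t within {p..p + h})"
      unfolding G_def element_cubic_def has_real_derivative_iff_has_vector_derivative[symmetric]
      by (auto intro!: derivative_eq_intros simp: field_simps power2_eq_square numeral_eq_Suc)
  qed (use assms in simp)
  moreover have "G (p + h) - G p = 0"
    by (simp add: G_def field_simps power2_eq_square numeral_eq_Suc)
  ultimately show ?thesis by simp
qed

lemma abs_element_cubic_le:
  assumes "t \<in> {p..p + h}"
  shows "\<bar>element_cubic p h t\<bar> \<le> h ^ 3"
proof -
  have "\<bar>t - p\<bar> \<le> h" "\<bar>t - (p + h / 2)\<bar> \<le> h" "\<bar>t - (p + h)\<bar> \<le> h"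
    using assms by auto
  then have "\<bar>t - p\<bar> * \<bar>t - (p + h / 2)\<bar> * \<bar>t - (p + h)\<bar> \<le> h * h * h"
    by (intro mult_mono) auto
  then show ?thesis by (simp add: element_cubic_def abs_mult power3_eq_cube)
qed

lemma continuous_on_local_quad_interp:
  "h \<noteq> 0 \<Longrightarrow> continuous_on S (local_quad_interp g p h)"
  unfolding local_quad_interp_def shape0_def shape_half_def shape1_def
  by (intro continuous_intros) auto

lemma integral_mean_zero_mult:
  fixes c r k :: "real \<Rightarrow> real"
  assumes "(c has_integral 0) S"
    and "(\<lambda>t. c t * (k t - k0)) integrable_on S" and "(\<lambda>t. r t * k t) integrable_on S"
  shows "integral S (\<lambda>t. (c t + r t) * k t) = integral S (\<lambda>t. c t * (k t - k0)) + integral S (\<lambda>t. r t * k t)"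
proof -
  have "((\<lambda>t. k0 * c t) has_integral 0) S"
    using has_integral_mult_right[OF assms(1), of k0] by simp
  from has_integral_add[OF this has_integral_add[OF assms(2,3)[THEN integrable_integral]]]
  have "((\<lambda>t. (c t + r t) * k t) has_integral
      integral S (\<lambda>t. c t * (k t - k0)) + integral S (\<lambda>t. r t * k t)) S"
    by (simp add: algebra_simps)
  then show ?thesis by (rule integral_unique)
qed

(* The mean-zero cubic part of the error only meets the oscillation of k over the element,
   which gains the extra power of h; the O(h^4) rest is paired with k itself. *)
lemma element_weighted_error:
  fixes D :: "nat \<Rightarrow> real \<Rightarrow> real"
  assumes "h > 0"
    and D: "\<And>m t. m < 4 \<Longrightarrow> t \<in> {p..p + h} \<Longrightarrow> (D m has_real_derivative D (Suc m) t) (at t within {p..p + h})"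
    and M3: "\<And>t. t \<in> {p..p + h} \<Longrightarrow> \<bar>D 3 t\<bar> \<le> M3"
    and M4: "\<And>t. t \<in> {p..p + h} \<Longrightarrow> \<bar>D 4 t\<bar> \<le> M4"
    and k: "continuous_on {p..p + h} k"
    and W: "\<And>t. t \<in> {p..p + h} \<Longrightarrow> \<bar>k t - k p\<bar> \<le> W"
    and K: "\<And>t. t \<in> {p..p + h} \<Longrightarrow> \<bar>k t\<bar> \<le> K"
  shows "\<bar>integral {p..p + h} (\<lambda>t. (D 0 t - local_quad_interp (D 0) p h t) * k t)\<bar>
    \<le> h * (M3 * h ^ 3 / 6 * W + M4 * h ^ 4 * K)"
proof -
  define c where "c = (\<lambda>t. D 3 p / 6 * element_cubic p h t)"
  define r where "r t = D 0 t - local_quad_interp (D 0) p h t - c t" for t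
  have p: "p \<in> {p..p + h}" and ph: "p \<le> p + h" using \<open>h > 0\<close> by auto
  have c_cont: "continuous_on {p..p + h} c"
    unfolding c_def element_cubic_def by (intro continuous_intros)
  have D0_cont: "continuous_on {p..p + h} (D 0)"
    by (rule DERIV_continuous_on[of _ _ "D 1"]) (use D in auto)
  have r_cont: "continuous_on {p..p + h} r"
    unfolding r_def using \<open>h > 0\<close>
    by (intro continuous_on_diff D0_cont c_cont continuous_on_local_quad_interp) simp
  have ck_cont: "continuous_on {p..p + h} (\<lambda>t. c t * (k t - k p))"
    by (intro continuous_on_mult continuous_on_diff c_cont k continuous_on_const)
  have rk_cont: "continuous_on {p..p + h} (\<lambda>t. r t * k t)"
    by (intro continuous_on_mult r_cont k)
  have "(element_cubic p h has_integral 0) {p..p + h}"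
    using \<open>h > 0\<close> by (intro element_cubic_has_integral) simp
  from has_integral_mult_right[OF this, of "D 3 p / 6"]
  have "(c has_integral 0) {p..p + h}" by (simp add: c_def)
  then have "integral {p..p + h} (\<lambda>t. (D 0 t - local_quad_interp (D 0) p h t) * k t)
      = integral {p..p + h} (\<lambda>t. c t * (k t - k p)) + integral {p..p + h} (\<lambda>t. r t * k t)"
    using integral_mean_zero_mult[of c "{p..p + h}" k "k p" r] ck_cont rk_cont
    by (simp add: r_def integrable_continuous_interval)
  moreover have "\<bar>integral {p..p + h} (\<lambda>t. c t * (k t - k p))\<bar> \<le> M3 * h ^ 3 / 6 * W * h"
  proof -
    have "\<bar>c t * (k t - k p)\<bar> \<le> M3 * h ^ 3 / 6 * W" if "t \<in> {p..p + h}" for t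
      using M3[OF p] W[OF that] abs_element_cubic_le[OF that] \<open>h > 0\<close>
      unfolding c_def abs_mult by (intro mult_mono) (auto intro!: mult_mono)
    then show ?thesis
      using integral_bound[OF ph ck_cont, of "M3 * h ^ 3 / 6 * W"] by simp
  qed
  moreover have "\<bar>integral {p..p + h} (\<lambda>t. r t * k t)\<bar> \<le> M4 * h ^ 4 * K * h"
  proof -
    have "\<bar>r t * k t\<bar> \<le> M4 * h ^ 4 * K" if "t \<in> {p..p + h}" for t
      using local_quad_interp_error[OF \<open>h > 0\<close> D M4 that] K[OF that] M4[OF that]
      unfolding r_def c_def abs_mult by (intro mult_mono) auto
    then show ?thesis
      using integral_bound[OF ph rk_cont, of "M4 * h ^ 4 * K"] by simp
  qed
  ultimately show ?thesis by (simp add: algebra_simps)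
qed

section \<open>Weighted error along a line\<close>

lemma has_integral_uniform_pieces:
  fixes f :: "real \<Rightarrow> real"
  assumes "0 \<le> h" and "\<And>l. l < M \<Longrightarrow> f integrable_on {\<alpha> + real l * h .. \<alpha> + real l * h + h}"
  shows "(f has_integral (\<Sum>l<M. integral {\<alpha> + real l * h .. \<alpha> + real l * h + h} f)) {\<alpha> .. \<alpha> + real M * h}"
  using assms(2)
proof (induction M)
  case 0
  then show ?case by (simp add: has_integral_refl(2))
next
  case (Suc M)
  have "\<alpha> \<le> \<alpha> + real M * h" "\<alpha> + real M * h \<le> \<alpha> + real M * h + h"
    using \<open>0 \<le> h\<close> by auto
  from has_integral_combine[OF this Suc.IH integrable_integral] Suc.prems
  show ?case by (simp add: algebra_simps)
qed

lemma abs_integral_le_sum_elements: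
  fixes F :: "real \<Rightarrow> real"
  assumes "\<alpha> < \<beta>" and "0 < M" and h: "h = (\<beta> - \<alpha>) / real M" and F: "continuous_on {\<alpha>..\<beta>} F"
    and e: "\<And>l. l < M \<Longrightarrow> \<bar>integral {\<alpha> + real l * h .. \<alpha> + real l * h + h} F\<bar> \<le> e l"
  shows "\<bar>integral {\<alpha>..\<beta>} F\<bar> \<le> (\<Sum>l<M. e l)"
proof -
  have "0 \<le> h" and "\<alpha> + real M * h = \<beta>" using assms(1,2) h by auto
  with has_integral_uniform_pieces[of h M F \<alpha>] element_subset[OF assms(1) _ h] F
  have "(F has_integral (\<Sum>l<M. integral {\<alpha> + real l * h .. \<alpha> + real l * h + h} F)) {\<alpha>..\<beta>}"
    by (simp add: integrable_continuous_interval continuous_on_subset)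
  then have "\<bar>integral {\<alpha>..\<beta>} F\<bar> \<le> (\<Sum>l<M. \<bar>integral {\<alpha> + real l * h .. \<alpha> + real l * h + h} F\<bar>)"
    by (simp add: integral_unique sum_abs)
  also have "\<dots> \<le> (\<Sum>l<M. e l)" by (intro sum_mono e) simp
  finally show ?thesis .
qed

lemma continuous_on_quad_interp_error:
  assumes "a < b" and "0 < M" and "continuous_on {a..b} g"
  shows "continuous_on {a..b} (\<lambda>t. g t - quad_interp a b M g t)"
  unfolding quad_interp_def
  by (intro continuous_intros assms continuous_on_phiQ[OF assms(1,2)])

lemma quad_interp_weighted_error:
  fixes D :: "nat \<Rightarrow> real \<Rightarrow> real" and k V :: "real \<Rightarrow> real"
  assumes "\<alpha> < \<beta>" and "0 < M" and h: "h = (\<beta> - \<alpha>) / real M"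
    and D: "\<And>m t. m < 4 \<Longrightarrow> t \<in> {\<alpha>..\<beta>} \<Longrightarrow> (D m has_real_derivative D (Suc m) t) (at t within {\<alpha>..\<beta>})"
    and M3: "\<And>t. t \<in> {\<alpha>..\<beta>} \<Longrightarrow> \<bar>D 3 t\<bar> \<le> M3"
    and M4: "\<And>t. t \<in> {\<alpha>..\<beta>} \<Longrightarrow> \<bar>D 4 t\<bar> \<le> M4"
    and k: "continuous_on {\<alpha>..\<beta>} k"
    and K: "\<And>t. t \<in> {\<alpha>..\<beta>} \<Longrightarrow> \<bar>k t\<bar> \<le> K"
    and V: "\<And>x y. x \<in> {\<alpha>..\<beta>} \<Longrightarrow> y \<in> {\<alpha>..\<beta>} \<Longrightarrow> x \<le> y \<Longrightarrow> \<bar>k y - k x\<bar> \<le> V y - V x"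
  shows "\<bar>integral {\<alpha>..\<beta>} (\<lambda>t. (D 0 t - quad_interp \<alpha> \<beta> M (D 0) t) * k t)\<bar>
    \<le> h ^ 4 * (M3 / 6 * (V \<beta> - V \<alpha>) + M4 * (\<beta> - \<alpha>) * K)"
proof -
  define F where "F t = (D 0 t - quad_interp \<alpha> \<beta> M (D 0) t) * k t" for t
  define p where "p l = \<alpha> + real l * h" for l
  have "h > 0" and Mh: "real M * h = \<beta> - \<alpha>" using assms(1,2) h by auto
  have D0_cont: "continuous_on {\<alpha>..\<beta>} (D 0)"
    by (rule DERIV_continuous_on[of _ _ "D 1"]) (use D in auto)
  have element: "\<bar>integral {p l .. p l + h} F\<bar>
      \<le> h * (M3 * h ^ 3 / 6 * (V (p l + h) - V (p l)) + M4 * h ^ 4 * K)" if "l < M" for l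
  proof -
    note sub = element_subset[OF assms(1) that h, folded p_def]
    have "integral {p l .. p l + h} F
        = integral {p l .. p l + h} (\<lambda>t. (D 0 t - local_quad_interp (D 0) (p l) h t) * k t)"
      unfolding F_def using quad_interp_on_element[OF assms(1) that h p_def] by (intro integral_cong) simp
    also have "\<bar>\<dots>\<bar> \<le> h * (M3 * h ^ 3 / 6 * (V (p l + h) - V (p l)) + M4 * h ^ 4 * K)"
    proof (rule element_weighted_error[OF \<open>h > 0\<close>])
      show "(D m has_real_derivative D (Suc m) t) (at t within {p l .. p l + h})"
        if "m < 4" "t \<in> {p l .. p l + h}" for m t
        using D[OF that(1), of t] that(2) sub by (auto intro: has_field_derivative_subset)
      show "\<bar>k t - k (p l)\<bar> \<le> V (p l + h) - V (p l)" if "t \<in> {p l .. p l + h}" for t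
        using V[of "p l" t] V[of t "p l + h"] that sub by force
    qed (use M3 M4 K sub continuous_on_subset[OF k sub] in auto)
    finally show ?thesis .
  qed
  have "\<bar>integral {\<alpha>..\<beta>} F\<bar> \<le> (\<Sum>l<M. h * (M3 * h ^ 3 / 6 * (V (p l + h) - V (p l)) + M4 * h ^ 4 * K))"
    unfolding p_def
    by (rule abs_integral_le_sum_elements[OF assms(1,2) h])
      (use element in \<open>auto simp: p_def F_def intro!: continuous_on_mult continuous_on_quad_interp_error assms(1,2) D0_cont k\<close>)
  also have "\<dots> = (\<Sum>l<M. M3 * h ^ 4 / 6 * (V (p (Suc l)) - V (p l)) + M4 * h ^ 5 * K)"
    by (intro sum.cong) (simp_all add: p_def algebra_simps power_eq_if)
  also have "\<dots> = M3 * h ^ 4 / 6 * (\<Sum>l<M. V (p (Suc l)) - V (p l)) + real M * (M4 * h ^ 5 * K)"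
    by (simp add: sum.distrib sum_distrib_left)
  also have "(\<Sum>l<M. V (p (Suc l)) - V (p l)) = V \<beta> - V \<alpha>"
    using sum_lessThan_telescope[of "\<lambda>l. V (p l)" M] Mh by (simp add: p_def)
  also have "M3 * h ^ 4 / 6 * (V \<beta> - V \<alpha>) + real M * (M4 * h ^ 5 * K)
      = h ^ 4 * (M3 / 6 * (V \<beta> - V \<alpha>) + M4 * (\<beta> - \<alpha>) * K)"
    unfolding Mh[symmetric] by (simp add: algebra_simps power_eq_if)
  finally show ?thesis unfolding F_def .
qed

lemma unimodal_variation_majorant:
  fixes k :: "real \<Rightarrow> real" and t0 K :: real
  assumes up: "\<And>x y. x \<le> y \<Longrightarrow> y \<le> t0 \<Longrightarrow> k x \<le> k y"
    and down: "\<And>x y. t0 \<le> x \<Longrightarrow> x \<le> y \<Longrightarrow> k y \<le> k x"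
    and K: "\<And>t. k t \<le> K"
    and V: "V = (\<lambda>t. if t \<le> t0 then k t else 2 * K - k t)"
    and "x \<le> y"
  shows "\<bar>k y - k x\<bar> \<le> V y - V x"
proof -
  consider "y \<le> t0" | "t0 < x" | "x \<le> t0" "t0 < y" using \<open>x \<le> y\<close> by linarith
  then show ?thesis
  proof cases
    case 1
    then show ?thesis using up[OF \<open>x \<le> y\<close>] \<open>x \<le> y\<close> by (simp add: V)
  next
    case 2
    then show ?thesis using down[of x y] \<open>x \<le> y\<close> by (simp add: V)
  next
    case 3
    then show ?thesis using K[of x] K[of y] by (simp add: V)
  qed
qed

definition slice_kernel :: "real \<Rightarrow> real \<Rightarrow> real \<Rightarrow> real \<Rightarrow> real" where
  "slice_kernel \<gamma> t0 s2 t = 1 / ((t0 - t)\<^sup>2 + s2) powr (\<gamma> / 2)"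

lemma power2_plus_pos: "0 < s \<Longrightarrow> 0 < (x::real)\<^sup>2 + s"
  by (rule add_nonneg_pos) simp_all

lemma slice_kernel_antimono:
  assumes "s2 > 0" and "\<gamma> > 0" and "\<bar>t0 - t'\<bar> \<le> \<bar>t0 - t\<bar>"
  shows "slice_kernel \<gamma> t0 s2 t \<le> slice_kernel \<gamma> t0 s2 t'"
proof -
  have "(t0 - t')\<^sup>2 \<le> (t0 - t)\<^sup>2"
    using assms(3) by (simp add: abs_le_square_iff)
  then have "((t0 - t')\<^sup>2 + s2) powr (\<gamma> / 2) \<le> ((t0 - t)\<^sup>2 + s2) powr (\<gamma> / 2)"
    using assms by (intro powr_mono2) auto
  moreover have "0 < ((t0 - t')\<^sup>2 + s2) powr (\<gamma> / 2)"
    using power2_plus_pos[OF assms(1), of "t0 - t'"] by simp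
  ultimately show ?thesis unfolding slice_kernel_def by (intro frac_le) simp_all
qed

lemma slice_kernel_bounds:
  assumes "s2 > 0" and "\<gamma> > 0"
  shows "0 < slice_kernel \<gamma> t0 s2 t" and "slice_kernel \<gamma> t0 s2 t \<le> s2 powr (- \<gamma> / 2)"
proof -
  show "0 < slice_kernel \<gamma> t0 s2 t"
    using power2_plus_pos[OF assms(1), of "t0 - t"] by (simp add: slice_kernel_def)
  have "slice_kernel \<gamma> t0 s2 t \<le> slice_kernel \<gamma> t0 s2 t0"
    using assms by (intro slice_kernel_antimono) auto
  also have "\<dots> = s2 powr (- \<gamma> / 2)"
    by (simp add: slice_kernel_def powr_minus_divide)
  finally show "slice_kernel \<gamma> t0 s2 t \<le> s2 powr (- \<gamma> / 2)" .
qed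

lemma continuous_on_slice_kernel:
  "s2 > 0 \<Longrightarrow> continuous_on S (slice_kernel \<gamma> t0 s2)"
  unfolding slice_kernel_def
  by (intro continuous_intros) (auto dest: power2_plus_pos[THEN less_imp_neq])

lemma quad_interp_slice_kernel_error:
  fixes D :: "nat \<Rightarrow> real \<Rightarrow> real"
  assumes "\<alpha> < \<beta>" and "0 < M" and h: "h = (\<beta> - \<alpha>) / real M"
    and D: "\<And>m t. m < 4 \<Longrightarrow> t \<in> {\<alpha>..\<beta>} \<Longrightarrow> (D m has_real_derivative D (Suc m) t) (at t within {\<alpha>..\<beta>})"
    and M3: "\<And>t. t \<in> {\<alpha>..\<beta>} \<Longrightarrow> \<bar>D 3 t\<bar> \<le> M3"
    and M4: "\<And>t. t \<in> {\<alpha>..\<beta>} \<Longrightarrow> \<bar>D 4 t\<bar> \<le> M4"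
    and "s2 > 0" and "\<gamma> > 0"
  shows "\<bar>integral {\<alpha>..\<beta>} (\<lambda>t. (D 0 t - quad_interp \<alpha> \<beta> M (D 0) t) * slice_kernel \<gamma> t0 s2 t)\<bar>
    \<le> h ^ 4 * (M3 / 3 + M4 * (\<beta> - \<alpha>)) * s2 powr (- \<gamma> / 2)"
proof -
  define k where "k = slice_kernel \<gamma> t0 s2"
  define K where "K = s2 powr (- \<gamma> / 2)"
  define V where "V = (\<lambda>t. if t \<le> t0 then k t else 2 * K - k t)"
  note k_bounds = slice_kernel_bounds[OF \<open>s2 > 0\<close> \<open>\<gamma> > 0\<close>, of t0, folded k_def K_def]
  have V: "\<bar>k y - k x\<bar> \<le> V y - V x" if "x \<le> y" for x y
  proof (rule unimodal_variation_majorant[OF _ _ _ V_def that])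
    show "k x \<le> k y" if "x \<le> y" "y \<le> t0" for x y
      unfolding k_def using that by (intro slice_kernel_antimono \<open>s2 > 0\<close> \<open>\<gamma> > 0\<close>) auto
    show "k y \<le> k x" if "t0 \<le> x" "x \<le> y" for x y
      unfolding k_def using that by (intro slice_kernel_antimono \<open>s2 > 0\<close> \<open>\<gamma> > 0\<close>) auto
  qed (use k_bounds in auto)
  have "\<bar>integral {\<alpha>..\<beta>} (\<lambda>t. (D 0 t - quad_interp \<alpha> \<beta> M (D 0) t) * k t)\<bar>
      \<le> h ^ 4 * (M3 / 6 * (V \<beta> - V \<alpha>) + M4 * (\<beta> - \<alpha>) * K)"
    by (rule quad_interp_weighted_error[OF assms(1-3) D M3 M4])
      (use k_bounds V continuous_on_slice_kernel[OF \<open>s2 > 0\<close>] in \<open>auto simp: k_def abs_le_iff less_imp_le\<close>)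
  also have "\<dots> \<le> h ^ 4 * (M3 / 6 * (2 * K) + M4 * (\<beta> - \<alpha>) * K)"
  proof -
    have "V \<beta> - V \<alpha> \<le> 2 * K"
      using k_bounds[of \<alpha>] k_bounds[of \<beta>] by (auto simp: V_def)
    moreover have "0 \<le> M3" using M3[of \<alpha>] \<open>\<alpha> < \<beta>\<close> by auto
    ultimately show ?thesis by (intro mult_left_mono add_right_mono) auto
  qed
  finally show ?thesis by (simp add: k_def K_def algebra_simps)
qed

section \<open>Weakly singular integrals\<close>

lemma abs_powr_has_integral_right:
  fixes \<gamma> t0 \<beta> :: real
  assumes "\<gamma> < 1" and "t0 \<le> \<beta>"
  shows "((\<lambda>t. \<bar>t0 - t\<bar> powr (- \<gamma>)) has_integral (\<beta> - t0) powr (1 - \<gamma>) / (1 - \<gamma>)) {t0..\<beta>}"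
proof -
  define F where "F t = (t - t0) powr (1 - \<gamma>) / (1 - \<gamma>)" for t
  have "((\<lambda>t. \<bar>t0 - t\<bar> powr (- \<gamma>)) has_integral F \<beta> - F t0) {t0..\<beta>}"
  proof (rule fundamental_theorem_of_calculus_interior_strong[where S = "{}" and f = F])
    fix t assume t: "t \<in> {t0<..<\<beta>} - {}"
    have "(F has_real_derivative (1 - \<gamma>) * (t - t0) powr (1 - \<gamma> - 1) * 1 / (1 - \<gamma>)) (at t)"
      unfolding F_def using t by (auto intro!: derivative_eq_intros)
    then show "(F has_vector_derivative \<bar>t0 - t\<bar> powr (- \<gamma>)) (at t)"
      using t assms(1) by (simp add: has_real_derivative_iff_has_vector_derivative)
  next
    show "continuous_on {t0..\<beta>} F"
      unfolding F_def using assms(1) by (intro continuous_intros continuous_on_powr') auto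
  qed (use assms in auto)
  then show ?thesis using assms(1) by (simp add: F_def)
qed

lemma abs_powr_has_integral:
  fixes \<gamma> \<alpha> t0 \<beta> :: real
  assumes "\<gamma> < 1" and "\<alpha> \<le> t0" and "t0 \<le> \<beta>"
  shows "((\<lambda>t. \<bar>t0 - t\<bar> powr (- \<gamma>)) has_integral
    ((t0 - \<alpha>) powr (1 - \<gamma>) + (\<beta> - t0) powr (1 - \<gamma>)) / (1 - \<gamma>)) {\<alpha>..\<beta>}"
proof -
  have "((\<lambda>t. \<bar>- t0 - t\<bar> powr (- \<gamma>)) has_integral (t0 - \<alpha>) powr (1 - \<gamma>) / (1 - \<gamma>)) {- t0 .. - \<alpha>}"
    using abs_powr_has_integral_right[of \<gamma> "- t0" "- \<alpha>"] assms by simp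
  from has_integral_reflect_lemma_real[OF this]
  have "((\<lambda>t. \<bar>t0 - t\<bar> powr (- \<gamma>)) has_integral (t0 - \<alpha>) powr (1 - \<gamma>) / (1 - \<gamma>)) {\<alpha>..t0}"
    by (simp add: abs_minus_commute)
  from has_integral_combine[OF assms(2,3) this abs_powr_has_integral_right[OF assms(1,3)]]
  show ?thesis by (simp add: add_divide_distrib)
qed

lemma abs_powr_integral_le:
  fixes \<gamma> \<alpha> t0 \<beta> :: real
  assumes "0 < \<gamma>" and "\<gamma> < 1" and "\<alpha> \<le> t0" and "t0 \<le> \<beta>"
  shows "integral {\<alpha>..\<beta>} (\<lambda>t. \<bar>t0 - t\<bar> powr (- \<gamma>)) \<le> 2 * (\<beta> - \<alpha>) powr (1 - \<gamma>) / (1 - \<gamma>)"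
proof -
  have "(t0 - \<alpha>) powr (1 - \<gamma>) \<le> (\<beta> - \<alpha>) powr (1 - \<gamma>)"
    by (rule powr_mono2) (use assms in auto)
  moreover have "(\<beta> - t0) powr (1 - \<gamma>) \<le> (\<beta> - \<alpha>) powr (1 - \<gamma>)"
    by (rule powr_mono2) (use assms in auto)
  ultimately show ?thesis
    using integral_unique[OF abs_powr_has_integral[OF assms(2-4)]] assms(2) by (simp add: divide_simps)
qed

lemma integral_diff_singleton:
  fixes f :: "real \<Rightarrow> real"
  shows "integral (S - {t0}) f = integral S f"
    and "f integrable_on (S - {t0}) \<longleftrightarrow> f integrable_on S"
  by (rule integral_spike_set integrable_spike_set_eq; rule negligible_subset[of "{t0}"]; force)+

lemma abs_integral_le_weakly_singular:
  fixes f :: "real \<Rightarrow> real"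
  assumes "0 < \<gamma>" and "\<gamma> < 1" and t0: "t0 \<in> {\<alpha>..\<beta>}" and "0 \<le> B"
    and f: "f integrable_on {\<alpha>..\<beta>}"
    and bound: "\<And>t. t \<in> {\<alpha>..\<beta>} \<Longrightarrow> t \<noteq> t0 \<Longrightarrow> \<bar>f t\<bar> \<le> B * \<bar>t0 - t\<bar> powr (- \<gamma>)"
  shows "\<bar>integral {\<alpha>..\<beta>} f\<bar> \<le> B * (2 * (\<beta> - \<alpha>) powr (1 - \<gamma>) / (1 - \<gamma>))"
proof -
  have g: "(\<lambda>t. B * \<bar>t0 - t\<bar> powr (- \<gamma>)) integrable_on {\<alpha>..\<beta>}"
    using abs_powr_has_integral[OF assms(2), of \<alpha> t0 \<beta>] t0 by (intro integrable_on_mult_right) auto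
  have "norm (integral ({\<alpha>..\<beta>} - {t0}) f) \<le> integral ({\<alpha>..\<beta>} - {t0}) (\<lambda>t. B * \<bar>t0 - t\<bar> powr (- \<gamma>))"
    by (rule integral_norm_bound_integral) (use f g bound in \<open>auto simp: integral_diff_singleton\<close>)
  then have "\<bar>integral {\<alpha>..\<beta>} f\<bar> \<le> integral ({\<alpha>..\<beta>} - {t0}) (\<lambda>t. B * \<bar>t0 - t\<bar> powr (- \<gamma>))"
    by (simp add: integral_diff_singleton)
  also have "\<dots> = B * integral {\<alpha>..\<beta>} (\<lambda>t. \<bar>t0 - t\<bar> powr (- \<gamma>))"
    by (simp add: integral_diff_singleton)
  also have "\<dots> \<le> B * (2 * (\<beta> - \<alpha>) powr (1 - \<gamma>) / (1 - \<gamma>))"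
    using abs_powr_integral_le[OF assms(1,2)] t0 \<open>0 \<le> B\<close> by (intro mult_left_mono) auto
  finally show ?thesis .
qed

section \<open>Changing the order of integration\<close>

(* At the singular point with \<epsilon> = 0 the value is 1 / 0 = 0; this null set never matters. *)
definition plane_kernel :: "real \<Rightarrow> real \<Rightarrow> real \<Rightarrow> real \<Rightarrow> real \<Rightarrow> real \<Rightarrow> real" where
  "plane_kernel \<gamma> \<epsilon> x0 y0 x y = 1 / ((x0 - x)\<^sup>2 + (y0 - y)\<^sup>2 + \<epsilon>) powr (\<gamma> / 2)"

lemma plane_kernel_commute: "plane_kernel \<gamma> \<epsilon> x0 y0 x y = plane_kernel \<gamma> \<epsilon> y0 x0 y x"
  by (simp add: plane_kernel_def add.commute)

lemma plane_kernel_nonneg: "0 \<le> plane_kernel \<gamma> \<epsilon> x0 y0 x y"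
  by (simp add: plane_kernel_def)

lemma plane_kernel_eq_slice_kernel: "plane_kernel \<gamma> 0 x0 y0 x y = slice_kernel \<gamma> x0 ((y0 - y)\<^sup>2) x"
  by (simp add: plane_kernel_def slice_kernel_def)

lemma power2_powr_half: "((x::real)\<^sup>2) powr (\<gamma> / 2) = \<bar>x\<bar> powr \<gamma>"
proof (cases "x = 0")
  case False
  then have "x\<^sup>2 = \<bar>x\<bar> powr 2" by (simp add: powr_realpow)
  then have "(x\<^sup>2) powr (\<gamma> / 2) = \<bar>x\<bar> powr (2 * (\<gamma> / 2))" by (simp only: powr_powr)
  then show ?thesis by simp
qed simp

lemma plane_kernel_le_abs_powr:
  assumes "x \<noteq> x0" and "0 \<le> \<epsilon>" and "0 < \<gamma>"
  shows "plane_kernel \<gamma> \<epsilon> x0 y0 x y \<le> \<bar>x0 - x\<bar> powr (- \<gamma>)"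
proof -
  have "\<bar>x0 - x\<bar> powr \<gamma> \<le> ((x0 - x)\<^sup>2 + (y0 - y)\<^sup>2 + \<epsilon>) powr (\<gamma> / 2)"
    unfolding power2_powr_half[symmetric] using assms by (intro powr_mono2) auto
  moreover have "0 < \<bar>x0 - x\<bar> powr \<gamma>" using assms(1) by simp
  ultimately show ?thesis
    unfolding plane_kernel_def powr_minus_divide by (intro frac_le) simp_all
qed

lemma continuous_on_plane_kernel:
  assumes "0 < \<epsilon>" and "continuous_on S f" and "continuous_on S g"
  shows "continuous_on S (\<lambda>z. plane_kernel \<gamma> \<epsilon> x0 y0 (f z) (g z))"
proof -
  have "(x0 - f z)\<^sup>2 + (y0 - g z)\<^sup>2 + \<epsilon> \<noteq> 0" for z
    using power2_plus_pos[OF power2_plus_pos[OF \<open>0 < \<epsilon>\<close>, of "y0 - g z"], of "x0 - f z"]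
    by (simp add: add.assoc)
  then show ?thesis unfolding plane_kernel_def by (intro continuous_intros assms) auto
qed

lemma plane_kernel_regularised_le:
  assumes "y \<noteq> y0" and "0 \<le> \<epsilon>" and "0 < \<gamma>"
  shows "plane_kernel \<gamma> \<epsilon> x0 y0 x y \<le> plane_kernel \<gamma> 0 x0 y0 x y"
proof -
  have pos: "0 < (x0 - x)\<^sup>2 + (y0 - y)\<^sup>2"
    using assms(1) by (simp add: add_nonneg_pos)
  then have "((x0 - x)\<^sup>2 + (y0 - y)\<^sup>2) powr (\<gamma> / 2) \<le> ((x0 - x)\<^sup>2 + (y0 - y)\<^sup>2 + \<epsilon>) powr (\<gamma> / 2)"
    using assms by (intro powr_mono2) auto
  with pos assms(1) show ?thesis unfolding plane_kernel_def by (intro frac_le) simp_all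
qed

lemma plane_kernel_regularised_tendsto:
  assumes "y \<noteq> y0"
  shows "(\<lambda>n. plane_kernel \<gamma> (inverse (real (Suc n))) x0 y0 x y) \<longlonglongrightarrow> plane_kernel \<gamma> 0 x0 y0 x y"
proof -
  have pos: "0 < (x0 - x)\<^sup>2 + (y0 - y)\<^sup>2"
    using assms by (simp add: add_nonneg_pos)
  have "(\<lambda>n. (x0 - x)\<^sup>2 + (y0 - y)\<^sup>2 + inverse (real (Suc n))) \<longlonglongrightarrow> (x0 - x)\<^sup>2 + (y0 - y)\<^sup>2"
    by (rule LIMSEQ_inverse_real_of_nat_add)
  then have "(\<lambda>n. ((x0 - x)\<^sup>2 + (y0 - y)\<^sup>2 + inverse (real (Suc n))) powr (\<gamma> / 2))
      \<longlonglongrightarrow> ((x0 - x)\<^sup>2 + (y0 - y)\<^sup>2) powr (\<gamma> / 2)"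
    using pos by (intro tendsto_powr tendsto_const) auto
  then show ?thesis
    unfolding plane_kernel_def using pos by (intro tendsto_divide tendsto_const) auto
qed

lemma integral_plane_kernel_regularised_tendsto:
  fixes f :: "real \<Rightarrow> real"
  assumes "y \<noteq> y0" and "0 < \<gamma>" and f: "continuous_on {a..b} f"
    and B: "\<And>x. x \<in> {a..b} \<Longrightarrow> \<bar>f x\<bar> \<le> B"
  shows "(\<lambda>n. integral {a..b} (\<lambda>x. f x * plane_kernel \<gamma> (inverse (real (Suc n))) x0 y0 x y))
    \<longlonglongrightarrow> integral {a..b} (\<lambda>x. f x * plane_kernel \<gamma> 0 x0 y0 x y)"
proof (rule dominated_convergence(2))
  have s2: "0 < (y0 - y)\<^sup>2" using assms(1) by simp
  show "(\<lambda>x. f x * plane_kernel \<gamma> (inverse (real (Suc n))) x0 y0 x y) integrable_on {a..b}" for n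
    by (intro integrable_continuous_interval continuous_intros f continuous_on_plane_kernel) auto
  show "(\<lambda>x. B * plane_kernel \<gamma> 0 x0 y0 x y) integrable_on {a..b}"
    unfolding plane_kernel_eq_slice_kernel
    by (intro integrable_continuous_interval continuous_intros continuous_on_slice_kernel s2)
  show "norm (f x * plane_kernel \<gamma> (inverse (real (Suc n))) x0 y0 x y) \<le> B * plane_kernel \<gamma> 0 x0 y0 x y"
    if "x \<in> {a..b}" for n x
    using B[OF that] plane_kernel_regularised_le[OF assms(1) _ assms(2), of "inverse (real (Suc n))" x0 x]
    by (auto simp: abs_mult plane_kernel_nonneg intro!: mult_mono)
  show "(\<lambda>n. f x * plane_kernel \<gamma> (inverse (real (Suc n))) x0 y0 x y) \<longlonglongrightarrow> f x * plane_kernel \<gamma> 0 x0 y0 x y"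
    for x
    by (intro tendsto_mult tendsto_const plane_kernel_regularised_tendsto assms(1))
qed

lemma continuous_on_slice:
  fixes A :: "real \<Rightarrow> real \<Rightarrow> real"
  assumes "continuous_on (S \<times> T) (\<lambda>z. A (fst z) (snd z))" and "y \<in> T"
  shows "continuous_on S (\<lambda>x. A x y)"
proof -
  have "continuous_on S (\<lambda>x. (\<lambda>z. A (fst z) (snd z)) (x, y))"
    by (rule continuous_on_compose2[OF assms(1)]) (use assms(2) in \<open>auto intro!: continuous_intros\<close>)
  then show ?thesis by simp
qed

lemma continuous_on_swap_args:
  fixes A :: "real \<Rightarrow> real \<Rightarrow> real"
  assumes "continuous_on (S \<times> T) (\<lambda>z. A (fst z) (snd z))"
  shows "continuous_on (T \<times> S) (\<lambda>z. A (snd z) (fst z))"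
proof -
  have "continuous_on (T \<times> S) (\<lambda>z. (\<lambda>z. A (fst z) (snd z)) (snd z, fst z))"
    by (rule continuous_on_compose2[OF assms]) (auto intro!: continuous_intros)
  then show ?thesis by simp
qed

lemma abs_integral_plane_kernel_le:
  fixes f :: "real \<Rightarrow> real"
  assumes "x0 \<in> {a..b}" and "0 < \<gamma>" and "\<gamma> < 1" and "0 \<le> \<epsilon>" and "0 \<le> B"
    and "(\<lambda>x. f x * plane_kernel \<gamma> \<epsilon> x0 y0 x y) integrable_on {a..b}"
    and B: "\<And>x. x \<in> {a..b} \<Longrightarrow> \<bar>f x\<bar> \<le> B"
  shows "\<bar>integral {a..b} (\<lambda>x. f x * plane_kernel \<gamma> \<epsilon> x0 y0 x y)\<bar>
    \<le> B * (2 * (b - a) powr (1 - \<gamma>) / (1 - \<gamma>))"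
proof (rule abs_integral_le_weakly_singular[OF assms(2,3,1,5,6)])
  show "\<bar>f x * plane_kernel \<gamma> \<epsilon> x0 y0 x y\<bar> \<le> B * \<bar>x0 - x\<bar> powr - \<gamma>"
    if "x \<in> {a..b}" "x \<noteq> x0" for x
    using B[OF that(1)] plane_kernel_le_abs_powr[OF that(2) assms(4,2)]
    by (auto simp: abs_mult plane_kernel_nonneg intro!: mult_mono)
qed

(* With \<epsilon> = 1/(n+1) the integrand is continuous and the integrals may be swapped.
   The inner integrals are bounded uniformly in n thanks to the weak singularity in x,
   and converge for y \<noteq> y0, so dominated convergence passes to the limit. *)
lemma iterated_integral_plane_kernel_tendsto:
  fixes A :: "real \<Rightarrow> real \<Rightarrow> real" and y0 :: real
  assumes x0: "x0 \<in> {a..b}" and "0 < \<gamma>" and "\<gamma> < 1"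
    and A: "continuous_on ({a..b} \<times> {c..d}) (\<lambda>z. A (fst z) (snd z))"
  defines "G \<equiv> \<lambda>\<epsilon> y. integral {a..b} (\<lambda>x. A x y * plane_kernel \<gamma> \<epsilon> x0 y0 x y)"
  shows "G 0 integrable_on {c..d}"
    and "(\<lambda>n. integral {c..d} (G (inverse (real (Suc n))))) \<longlonglongrightarrow> integral {c..d} (G 0)"
proof -
  obtain B where "0 \<le> B" and B: "\<And>z. z \<in> {a..b} \<times> {c..d} \<Longrightarrow> norm (A (fst z) (snd z)) \<le> B"
    using continuous_on_compact_bound[OF compact_Times[OF compact_Icc compact_Icc] A] by blast
  define J where "J = 2 * (b - a) powr (1 - \<gamma>) / (1 - \<gamma>)"
  have G_cont: "continuous_on {c..d} (G (inverse (real (Suc n))))" for n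
  proof -
    have "continuous_on ({c..d} \<times> cbox a b)
        (\<lambda>(y, x). A x y * plane_kernel \<gamma> (inverse (real (Suc n))) x0 y0 x y)"
      unfolding case_prod_beta box_real
      by (intro continuous_intros continuous_on_plane_kernel continuous_on_swap_args[OF A]) auto
    from integral_continuous_on_param[OF this] show ?thesis by (simp add: G_def)
  qed
  have G_bound: "\<bar>G (inverse (real (Suc n))) y\<bar> \<le> B * J" if "y \<in> {c..d}" for n y
    unfolding G_def J_def
  proof (rule abs_integral_plane_kernel_le[OF x0 assms(2,3) _ \<open>0 \<le> B\<close>])
    show "(\<lambda>x. A x y * plane_kernel \<gamma> (inverse (real (Suc n))) x0 y0 x y) integrable_on {a..b}"
      by (intro integrable_continuous_interval continuous_intros continuous_on_plane_kernel
          continuous_on_slice[OF A that]) auto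
  qed (use B that in auto)
  have G_tendsto: "(\<lambda>n. G (inverse (real (Suc n))) y) \<longlonglongrightarrow> G 0 y" if "y \<in> {c..d} - {y0}" for y
    unfolding G_def using that B assms(2)
    by (intro integral_plane_kernel_regularised_tendsto[where B = B] continuous_on_slice[OF A]) auto
  have "G (inverse (real (Suc n))) integrable_on ({c..d} - {y0})" for n
    using integrable_continuous_interval[OF G_cont] by (simp add: integral_diff_singleton)
  moreover have "(\<lambda>_. B * J) integrable_on ({c..d} - {y0})"
    by (simp add: integral_diff_singleton integrable_const_ivl)
  moreover have "norm (G (inverse (real (Suc n))) y) \<le> B * J" if "y \<in> {c..d} - {y0}" for n y
    using G_bound that by simp
  ultimately have "G 0 integrable_on ({c..d} - {y0})"
    and lim: "(\<lambda>n. integral ({c..d} - {y0}) (G (inverse (real (Suc n))))) \<longlonglongrightarrow> integral ({c..d} - {y0}) (G 0)"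
    using dominated_convergence[of "\<lambda>n. G (inverse (real (Suc n)))" "{c..d} - {y0}" "\<lambda>_. B * J" "G 0"] G_tendsto
    by blast+
  then show "G 0 integrable_on {c..d}" by (simp add: integral_diff_singleton)
  from lim show "(\<lambda>n. integral {c..d} (G (inverse (real (Suc n))))) \<longlonglongrightarrow> integral {c..d} (G 0)"
    by (simp add: integral_diff_singleton)
qed

lemma integral_swap_plane_kernel:
  fixes A :: "real \<Rightarrow> real \<Rightarrow> real"
  assumes x0: "x0 \<in> {a..b}" and y0: "y0 \<in> {c..d}" and "0 < \<gamma>" and "\<gamma> < 1"
    and A: "continuous_on ({a..b} \<times> {c..d}) (\<lambda>z. A (fst z) (snd z))"
  shows "(\<lambda>y. integral {a..b} (\<lambda>x. A x y * plane_kernel \<gamma> 0 x0 y0 x y)) integrable_on {c..d}"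
    and "(\<lambda>x. integral {c..d} (\<lambda>y. A x y * plane_kernel \<gamma> 0 x0 y0 x y)) integrable_on {a..b}"
    and "integral {c..d} (\<lambda>y. integral {a..b} (\<lambda>x. A x y * plane_kernel \<gamma> 0 x0 y0 x y))
       = integral {a..b} (\<lambda>x. integral {c..d} (\<lambda>y. A x y * plane_kernel \<gamma> 0 x0 y0 x y))"
proof -
  note yx = iterated_integral_plane_kernel_tendsto[OF x0 assms(3,4) A, of y0]
  note xy = iterated_integral_plane_kernel_tendsto[OF y0 assms(3,4) continuous_on_swap_args[OF A], of x0,
      unfolded plane_kernel_commute[of _ _ y0 x0]]
  show "(\<lambda>y. integral {a..b} (\<lambda>x. A x y * plane_kernel \<gamma> 0 x0 y0 x y)) integrable_on {c..d}"
    using yx(1) .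
  show "(\<lambda>x. integral {c..d} (\<lambda>y. A x y * plane_kernel \<gamma> 0 x0 y0 x y)) integrable_on {a..b}"
    using xy(1) .
  have "integral {c..d} (\<lambda>y. integral {a..b} (\<lambda>x. A x y * plane_kernel \<gamma> \<epsilon> x0 y0 x y))
      = integral {a..b} (\<lambda>x. integral {c..d} (\<lambda>y. A x y * plane_kernel \<gamma> \<epsilon> x0 y0 x y))"
    if "0 < \<epsilon>" for \<epsilon>
  proof -
    have "continuous_on (cbox (a, c) (b, d)) (\<lambda>(x, y). A x y * plane_kernel \<gamma> \<epsilon> x0 y0 x y)"
      unfolding cbox_Pair_eq box_real case_prod_beta
      by (intro continuous_intros continuous_on_plane_kernel A that)
    from integral_swap_continuous[OF this] show ?thesis by (simp add: box_real)
  qed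
  then show "integral {c..d} (\<lambda>y. integral {a..b} (\<lambda>x. A x y * plane_kernel \<gamma> 0 x0 y0 x y))
       = integral {a..b} (\<lambda>x. integral {c..d} (\<lambda>y. A x y * plane_kernel \<gamma> 0 x0 y0 x y))"
    using LIMSEQ_unique[OF yx(2)] xy(2) by simp
qed

section \<open>Partial derivatives\<close>

lemma smooth2_on_continuous_on: "smooth2_on k S f \<Longrightarrow> continuous_on S (\<lambda>p. f (fst p) (snd p))"
  by (cases k) auto

lemma pair_in_swap_image_iff: "(x, y) \<in> prod.swap ` S \<longleftrightarrow> (y, x) \<in> S"
  by force

lemma continuous_on_swap_image:
  assumes "continuous_on S (\<lambda>p. f (fst p) (snd p))"
  shows "continuous_on (prod.swap ` S) (\<lambda>p. f (snd p) (fst p))"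
proof -
  have "prod.swap ` prod.swap ` S \<subseteq> S" by (auto simp: image_iff)
  from continuous_on_compose2[OF assms continuous_on_swap this] show ?thesis by simp
qed

lemma smooth2_on_swap:
  "smooth2_on k S f \<Longrightarrow> smooth2_on k (prod.swap ` S) (\<lambda>x y. f y x)"
proof (induction k arbitrary: f)
  case 0
  then show ?case using continuous_on_swap_image by simp
next
  case (Suc k)
  then obtain fx fy where
    d: "\<forall>x y. (x, y) \<in> S \<longrightarrow>
      ((\<lambda>t. f t y) has_real_derivative fx x y) (at x within {t. (t, y) \<in> S}) \<and>
      ((\<lambda>t. f x t) has_real_derivative fy x y) (at y within {t. (x, t) \<in> S})"
    and "smooth2_on k S fx" "smooth2_on k S fy"
    by auto
  with Suc.IH have smooth: "smooth2_on k (prod.swap ` S) (\<lambda>x y. fy y x)"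
    "smooth2_on k (prod.swap ` S) (\<lambda>x y. fx y x)"
    by blast+
  have "\<exists>gx gy. (\<forall>x y. (x, y) \<in> prod.swap ` S \<longrightarrow>
      ((\<lambda>t. f y t) has_real_derivative gx x y) (at x within {t. (t, y) \<in> prod.swap ` S}) \<and>
      ((\<lambda>t. f t x) has_real_derivative gy x y) (at y within {t. (x, t) \<in> prod.swap ` S})) \<and>
      smooth2_on k (prod.swap ` S) gx \<and> smooth2_on k (prod.swap ` S) gy"
    by (rule exI[of _ "\<lambda>x y. fy y x"], rule exI[of _ "\<lambda>x y. fx y x"])
      (use d smooth in \<open>simp add: pair_in_swap_image_iff\<close>)
  then show ?case
    using Suc.prems by (simp add: continuous_on_swap_image)
qed

lemma smooth2_on_x_derivatives:
  assumes "smooth2_on (n + k) S f"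
  shows "\<exists>D. D 0 = f \<and>
    (\<forall>m<n. \<forall>x y. (x, y) \<in> S \<longrightarrow>
      ((\<lambda>t. D m t y) has_real_derivative D (Suc m) x y) (at x within {t. (t, y) \<in> S})) \<and>
    (\<forall>m\<le>n. smooth2_on (n - m + k) S (D m))"
  using assms
proof (induction n arbitrary: k)
  case 0
  then show ?case by (intro exI[of _ "\<lambda>_. f"]) simp
next
  case (Suc n)
  have "smooth2_on (n + Suc k) S f"
    using Suc.prems by (simp only: add_Suc_right add_Suc)
  from Suc.IH[OF this] obtain D where D0: "D 0 = f"
    and D: "\<forall>m<n. \<forall>x y. (x, y) \<in> S \<longrightarrow>
      ((\<lambda>t. D m t y) has_real_derivative D (Suc m) x y) (at x within {t. (t, y) \<in> S})"
    and smooth: "\<forall>m\<le>n. smooth2_on (n - m + Suc k) S (D m)"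
    by blast
  from smooth[rule_format, of n] obtain fx where
    fx: "\<forall>x y. (x, y) \<in> S \<longrightarrow>
      ((\<lambda>t. D n t y) has_real_derivative fx x y) (at x within {t. (t, y) \<in> S})"
    and "smooth2_on k S fx"
    by auto
  define D' where "D' = D(Suc n := fx)"
  have "\<forall>m<Suc n. \<forall>x y. (x, y) \<in> S \<longrightarrow>
      ((\<lambda>t. D' m t y) has_real_derivative D' (Suc m) x y) (at x within {t. (t, y) \<in> S})"
  proof (intro allI impI)
    fix m x y assume "m < Suc n" "(x, y) \<in> S"
    then consider "m = n" | "m < n" by linarith
    then show "((\<lambda>t. D' m t y) has_real_derivative D' (Suc m) x y) (at x within {t. (t, y) \<in> S})"
      by cases (use D fx \<open>(x, y) \<in> S\<close> in \<open>simp_all add: D'_def\<close>)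
  qed
  moreover have "\<forall>m\<le>Suc n. smooth2_on (Suc n - m + k) S (D' m)"
  proof (intro allI impI)
    fix m assume "m \<le> Suc n"
    then consider "m = Suc n" | "m \<le> n" by linarith
    then show "smooth2_on (Suc n - m + k) S (D' m)"
      by cases (use smooth \<open>smooth2_on k S fx\<close> in \<open>simp_all add: D'_def Suc_diff_le\<close>)
  qed
  moreover have "D' 0 = f" using D0 by (simp add: D'_def)
  ultimately show ?case by blast
qed

lemma smooth2_on_rectangle_x_derivatives:
  assumes "smooth2_on (n + k) ({a..b} \<times> {c..d}) f"
  obtains D where "D 0 = f"
    and "\<And>m x y. m < n \<Longrightarrow> x \<in> {a..b} \<Longrightarrow> y \<in> {c..d} \<Longrightarrow>
      ((\<lambda>t. D m t y) has_real_derivative D (Suc m) x y) (at x within {a..b})"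
    and "\<And>m. m \<le> n \<Longrightarrow> continuous_on ({a..b} \<times> {c..d}) (\<lambda>p. D m (fst p) (snd p))"
proof -
  obtain D where "D 0 = f"
    and D: "\<forall>m<n. \<forall>x y. (x, y) \<in> {a..b} \<times> {c..d} \<longrightarrow>
      ((\<lambda>t. D m t y) has_real_derivative D (Suc m) x y) (at x within {t. (t, y) \<in> {a..b} \<times> {c..d}})"
    and smooth: "\<forall>m\<le>n. smooth2_on (n - m + k) ({a..b} \<times> {c..d}) (D m)"
    using smooth2_on_x_derivatives[OF assms] by blast
  show ?thesis
  proof (rule that[of D])
    show "D 0 = f" by fact
    show "((\<lambda>t. D m t y) has_real_derivative D (Suc m) x y) (at x within {a..b})"
      if "m < n" "x \<in> {a..b}" "y \<in> {c..d}" for m x y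
    proof -
      have "{t. (t, y) \<in> {a..b} \<times> {c..d}} = {a..b}" using that(3) by auto
      then show ?thesis using D that by auto
    qed
    show "continuous_on ({a..b} \<times> {c..d}) (\<lambda>p. D m (fst p) (snd p))" if "m \<le> n" for m
      using smooth that smooth2_on_continuous_on by blast
  qed
qed

lemma smooth2_on_rectangle_y_derivatives:
  assumes "smooth2_on (n + k) ({a..b} \<times> {c..d}) f"
  obtains D where "D 0 = f"
    and "\<And>m x y. m < n \<Longrightarrow> x \<in> {a..b} \<Longrightarrow> y \<in> {c..d} \<Longrightarrow>
      ((\<lambda>t. D m x t) has_real_derivative D (Suc m) x y) (at y within {c..d})"
    and "\<And>m. m \<le> n \<Longrightarrow> continuous_on ({a..b} \<times> {c..d}) (\<lambda>p. D m (fst p) (snd p))"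
proof -
  have "smooth2_on (n + k) ({c..d} \<times> {a..b}) (\<lambda>x y. f y x)"
    using smooth2_on_swap[OF assms] by (simp add: product_swap)
  then obtain D where D0: "D 0 = (\<lambda>x y. f y x)"
    and D: "\<And>m x y. m < n \<Longrightarrow> x \<in> {c..d} \<Longrightarrow> y \<in> {a..b} \<Longrightarrow>
      ((\<lambda>t. D m t y) has_real_derivative D (Suc m) x y) (at x within {c..d})"
    and cont: "\<And>m. m \<le> n \<Longrightarrow> continuous_on ({c..d} \<times> {a..b}) (\<lambda>p. D m (fst p) (snd p))"
    by (rule smooth2_on_rectangle_x_derivatives) blast
  show ?thesis
  proof (rule that[of "\<lambda>m x y. D m y x"])
    show "(\<lambda>x y. D 0 y x) = f" using D0 by simp
  qed (use D cont continuous_on_swap_args in auto)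
qed

lemma continuous_on_rectangle_bounded:
  fixes D :: "real \<Rightarrow> real \<Rightarrow> real"
  assumes "continuous_on ({a..b} \<times> {c..d}) (\<lambda>p. D (fst p) (snd p))"
  obtains B where "\<And>x y. x \<in> {a..b} \<Longrightarrow> y \<in> {c..d} \<Longrightarrow> \<bar>D x y\<bar> \<le> B"
proof -
  obtain B where B: "\<And>z. z \<in> {a..b} \<times> {c..d} \<Longrightarrow> norm (D (fst z) (snd z)) \<le> B"
    using continuous_on_compact_bound[OF compact_Times[OF compact_Icc compact_Icc] assms] by blast
  show ?thesis by (rule that[of B]) (use B[of "(x, y)" for x y] in auto)
qed

section \<open>The two-dimensional estimate\<close>

lemma quad_interp_diff:
  "quad_interp a b M (\<lambda>t. f t - g t) x = quad_interp a b M f x - quad_interp a b M g x"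
  by (simp add: quad_interp_def right_diff_distrib sum_subtractf)

lemma uQ_eq_quad_interp_quad_interp:
  "uQ u a b c d Mx My x y = quad_interp c d My (\<lambda>y'. quad_interp a b Mx (\<lambda>x'. u x' y') x) y"
  unfolding uQ_def quad_interp_def
  by (subst sum.swap) (simp add: sum_distrib_left mult_ac)

lemma uQ_error_split:
  "u x y - uQ u a b c d Mx My x y = (u x y - quad_interp c d My (u x) y)
    + quad_interp c d My (\<lambda>y'. u x y' - quad_interp a b Mx (\<lambda>x'. u x' y') x) y"
  unfolding quad_interp_diff uQ_eq_quad_interp_quad_interp by simp

lemma node_in_interval:
  assumes "a < b" and "0 < M" and "r \<le> 2 * M"
  shows "node a ((b - a) / real M) (real r / 2) \<in> {a..b}"
proof -
  have "real r / 2 * ((b - a) / real M) \<le> real M * ((b - a) / real M)"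
    using assms by (intro mult_right_mono) auto
  then show ?thesis using assms by (auto simp: node_def)
qed

lemma continuous_on_quad_interp_snd:
  fixes F :: "'a::topological_space \<Rightarrow> real \<Rightarrow> real"
  assumes "c < d" and "0 < M" and F: "continuous_on (S \<times> {c..d}) (\<lambda>z. F (fst z) (snd z))"
  shows "continuous_on (S \<times> {c..d}) (\<lambda>z. quad_interp c d M (F (fst z)) (snd z))"
  unfolding quad_interp_def
proof (intro continuous_intros)
  fix r assume r: "r \<in> {0..2 * M}"
  show "continuous_on (S \<times> {c..d}) (\<lambda>z. phiQ c d M r (snd z))"
    by (rule continuous_on_compose2[OF continuous_on_phiQ[OF assms(1,2)]]) (auto intro!: continuous_intros)
  have "continuous_on (S \<times> {c..d})
      (\<lambda>z. (\<lambda>z. F (fst z) (snd z)) (fst z, node c ((d - c) / real M) (real r / 2)))"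
    using node_in_interval[OF assms(1,2), of r] r
    by (intro continuous_on_compose2[OF F]) (auto intro!: continuous_intros)
  then show "continuous_on (S \<times> {c..d}) (\<lambda>z. F (fst z) (node c ((d - c) / real M) (real r / 2)))"
    by simp
qed

lemma continuous_on_uQ:
  assumes "a < b" and "c < d" and "0 < Mx" and "0 < My"
    and u: "continuous_on ({a..b} \<times> {c..d}) (\<lambda>z. u (fst z) (snd z))"
  shows "continuous_on ({a..b} \<times> {c..d}) (\<lambda>z. uQ u a b c d Mx My (fst z) (snd z))"
proof -
  have "continuous_on ({c..d} \<times> {a..b}) (\<lambda>z. quad_interp a b Mx (\<lambda>x'. u x' (fst z)) (snd z))"
    using continuous_on_quad_interp_snd[OF assms(1,3) continuous_on_swap_args[OF u]] by simp
  from continuous_on_quad_interp_snd[OF assms(2,4) continuous_on_swap_args[OF this]]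
  show ?thesis by (simp add: uQ_eq_quad_interp_quad_interp)
qed

lemma quad_interp_plane_kernel_error:
  fixes D :: "nat \<Rightarrow> real \<Rightarrow> real"
  assumes "\<alpha> < \<beta>" and "0 < M" and h: "h = (\<beta> - \<alpha>) / real M"
    and D: "\<And>m t. m < 4 \<Longrightarrow> t \<in> {\<alpha>..\<beta>} \<Longrightarrow> (D m has_real_derivative D (Suc m) t) (at t within {\<alpha>..\<beta>})"
    and M3: "\<And>t. t \<in> {\<alpha>..\<beta>} \<Longrightarrow> \<bar>D 3 t\<bar> \<le> M3"
    and M4: "\<And>t. t \<in> {\<alpha>..\<beta>} \<Longrightarrow> \<bar>D 4 t\<bar> \<le> M4"
    and "s \<noteq> s0" and "0 < \<gamma>"
  shows "\<bar>integral {\<alpha>..\<beta>} (\<lambda>t. (D 0 t - quad_interp \<alpha> \<beta> M (D 0) t) * plane_kernel \<gamma> 0 t0 s0 t s)\<bar>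
    \<le> h ^ 4 * (M3 / 3 + M4 * (\<beta> - \<alpha>)) * \<bar>s0 - s\<bar> powr (- \<gamma>)"
proof -
  have "((s0 - s)\<^sup>2) powr (- \<gamma> / 2) = \<bar>s0 - s\<bar> powr (- \<gamma>)"
    using power2_powr_half[of "s0 - s" "- \<gamma>"] by simp
  moreover have "0 < (s0 - s)\<^sup>2" using \<open>s \<noteq> s0\<close> by simp
  ultimately show ?thesis
    unfolding plane_kernel_eq_slice_kernel
    using quad_interp_slice_kernel_error[OF assms(1-3) D M3 M4 _ \<open>0 < \<gamma>\<close>, of "(s0 - s)\<^sup>2" t0]
    by simp
qed

lemma abs_integral_quad_interp_le:
  fixes W :: "real \<Rightarrow> real \<Rightarrow> real" and k :: "real \<Rightarrow> real"
  assumes "c < d" and "0 < M" and "y \<in> {c..d}"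
    and int: "\<And>r. r \<le> 2 * M \<Longrightarrow> (\<lambda>x. W x (node c ((d - c) / real M) (real r / 2)) * k x) integrable_on S"
    and bound: "\<And>r. r \<le> 2 * M \<Longrightarrow> \<bar>integral S (\<lambda>x. W x (node c ((d - c) / real M) (real r / 2)) * k x)\<bar> \<le> C"
  shows "\<bar>integral S (\<lambda>x. quad_interp c d M (W x) y * k x)\<bar> \<le> 3 * C"
proof -
  define I where "I r = integral S (\<lambda>x. W x (node c ((d - c) / real M) (real r / 2)) * k x)" for r
  have "integral S (\<lambda>x. quad_interp c d M (W x) y * k x)
      = integral S (\<lambda>x. \<Sum>r = 0..2 * M. phiQ c d M r y * (W x (node c ((d - c) / real M) (real r / 2)) * k x))"
    by (simp add: quad_interp_def sum_distrib_right mult.assoc)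
  also have "\<dots> = (\<Sum>r = 0..2 * M. phiQ c d M r y * I r)"
    using int by (subst integral_sum) (auto simp: I_def integrable_on_mult_right)
  finally have "\<bar>integral S (\<lambda>x. quad_interp c d M (W x) y * k x)\<bar> \<le> (\<Sum>r = 0..2 * M. \<bar>phiQ c d M r y\<bar> * \<bar>I r\<bar>)"
    by (simp add: abs_mult order_trans[OF sum_abs])
  also have "\<dots> \<le> (\<Sum>r = 0..2 * M. \<bar>phiQ c d M r y\<bar>) * C"
    unfolding sum_distrib_right using bound by (intro sum_mono mult_left_mono) (auto simp: I_def)
  also have "\<dots> \<le> 3 * C"
    using sum_abs_phiQ_le_3[OF assms(1-3)] bound[of 0] by (intro mult_right_mono) auto
  finally show ?thesis .
qed

lemma iterated_integral_y_interp_error: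
  fixes u :: "real \<Rightarrow> real \<Rightarrow> real" and Dy :: "nat \<Rightarrow> real \<Rightarrow> real \<Rightarrow> real"
  assumes "a < b" and "c < d" and "0 < \<gamma>" and "\<gamma> < 1" and "0 < My"
    and xi: "xi \<in> {a..b}" and yj: "yj \<in> {c..d}"
    and u: "continuous_on ({a..b} \<times> {c..d}) (\<lambda>z. u (fst z) (snd z))"
    and Dy0: "Dy 0 = u"
    and Dy: "\<And>m x y. m < 4 \<Longrightarrow> x \<in> {a..b} \<Longrightarrow> y \<in> {c..d} \<Longrightarrow>
      ((\<lambda>t. Dy m x t) has_real_derivative Dy (Suc m) x y) (at y within {c..d})"
    and MY: "\<And>x y. x \<in> {a..b} \<Longrightarrow> y \<in> {c..d} \<Longrightarrow> \<bar>Dy 3 x y\<bar> \<le> MY3 \<and> \<bar>Dy 4 x y\<bar> \<le> MY4"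
  shows "\<bar>integral {c..d} (\<lambda>y. integral {a..b} (\<lambda>x.
      (u x y - quad_interp c d My (u x) y) * plane_kernel \<gamma> 0 xi yj x y))\<bar>
    \<le> ((d - c) / real My) ^ 4 * (MY3 / 3 + MY4 * (d - c)) * (2 * (b - a) powr (1 - \<gamma>) / (1 - \<gamma>))"
proof -
  define A where "A x y = u x y - quad_interp c d My (u x) y" for x y
  have A_cont: "continuous_on ({a..b} \<times> {c..d}) (\<lambda>z. A (fst z) (snd z))"
    unfolding A_def by (intro continuous_intros u continuous_on_quad_interp_snd assms(2,5))
  note swap = integral_swap_plane_kernel[OF xi yj assms(3,4) A_cont]
  have "0 \<le> MY3" using MY[of a c] assms(1,2) by force
  have "\<bar>integral {c..d} (\<lambda>y. A x y * plane_kernel \<gamma> 0 xi yj x y)\<bar>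
      \<le> ((d - c) / real My) ^ 4 * (MY3 / 3 + MY4 * (d - c)) * \<bar>xi - x\<bar> powr - \<gamma>"
    if "x \<in> {a..b}" "x \<noteq> xi" for x
    using quad_interp_plane_kernel_error[OF assms(2,5) refl, of "\<lambda>m t. Dy m x t" MY3 MY4 x xi \<gamma> yj]
      Dy MY that \<open>0 < \<gamma>\<close>
    by (simp add: A_def Dy0 plane_kernel_commute[of _ _ xi])
  then have "\<bar>integral {a..b} (\<lambda>x. integral {c..d} (\<lambda>y. A x y * plane_kernel \<gamma> 0 xi yj x y))\<bar>
      \<le> ((d - c) / real My) ^ 4 * (MY3 / 3 + MY4 * (d - c)) * (2 * (b - a) powr (1 - \<gamma>) / (1 - \<gamma>))"
    using \<open>0 \<le> MY3\<close> MY[of a c] assms(1,2)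
    by (intro abs_integral_le_weakly_singular[OF assms(3,4) xi _ swap(2)]) force+
  with swap(3) show ?thesis by (simp add: A_def)
qed

lemma x_interp_error_on_line:
  fixes u :: "real \<Rightarrow> real \<Rightarrow> real" and Dx :: "nat \<Rightarrow> real \<Rightarrow> real \<Rightarrow> real"
  assumes "a < b" and "c < d" and "0 < \<gamma>" and "0 < Mx" and "0 < My"
    and y: "y \<in> {c..d}" "y \<noteq> yj"
    and u: "continuous_on ({a..b} \<times> {c..d}) (\<lambda>z. u (fst z) (snd z))"
    and Dx0: "Dx 0 = u"
    and Dx: "\<And>m x y. m < 4 \<Longrightarrow> x \<in> {a..b} \<Longrightarrow> y \<in> {c..d} \<Longrightarrow>
      ((\<lambda>t. Dx m t y) has_real_derivative Dx (Suc m) x y) (at x within {a..b})"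
    and MX: "\<And>x y. x \<in> {a..b} \<Longrightarrow> y \<in> {c..d} \<Longrightarrow> \<bar>Dx 3 x y\<bar> \<le> MX3 \<and> \<bar>Dx 4 x y\<bar> \<le> MX4"
  shows "\<bar>integral {a..b} (\<lambda>x. quad_interp c d My
      (\<lambda>y'. u x y' - quad_interp a b Mx (\<lambda>x'. u x' y') x) y * plane_kernel \<gamma> 0 xi yj x y)\<bar>
    \<le> 3 * (((b - a) / real Mx) ^ 4 * (MX3 / 3 + MX4 * (b - a)) * \<bar>yj - y\<bar> powr - \<gamma>)"
proof (rule abs_integral_quad_interp_le[OF assms(2,5) y(1)])
  fix r assume "r \<le> 2 * My"
  then have yr: "node c ((d - c) / real My) (real r / 2) \<in> {c..d}"
    by (rule node_in_interval[OF assms(2,5)])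
  define g where "g = (\<lambda>x. u x (node c ((d - c) / real My) (real r / 2)))"
  have "continuous_on {a..b} (\<lambda>x. g x - quad_interp a b Mx g x)"
    unfolding g_def by (intro continuous_on_quad_interp_error assms(1,4) continuous_on_slice[OF u yr])
  moreover have "continuous_on {a..b} (\<lambda>x. plane_kernel \<gamma> 0 xi yj x y)"
    unfolding plane_kernel_eq_slice_kernel using y(2) by (intro continuous_on_slice_kernel) simp
  ultimately show "(\<lambda>x. (g x - quad_interp a b Mx g x) * plane_kernel \<gamma> 0 xi yj x y) integrable_on {a..b}"
    by (intro integrable_continuous_interval continuous_on_mult)
  show "\<bar>integral {a..b} (\<lambda>x. (g x - quad_interp a b Mx g x) * plane_kernel \<gamma> 0 xi yj x y)\<bar>
      \<le> ((b - a) / real Mx) ^ 4 * (MX3 / 3 + MX4 * (b - a)) * \<bar>yj - y\<bar> powr - \<gamma>"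
    using quad_interp_plane_kernel_error[OF assms(1,4) refl,
        of "\<lambda>m t. Dx m t (node c ((d - c) / real My) (real r / 2))" MX3 MX4 y yj \<gamma> xi]
      Dx MX yr y(2) \<open>0 < \<gamma>\<close>
    by (simp add: g_def Dx0)
qed

(* With u - uQ = (u - I_y u) + I_y (u - I_x u) (uQ_error_split), the first part is
   integrated in y first, after changing the order of integration, and the second in x,
   separately for each y-node. *)
lemma weighted_interpolation_error_le:
  fixes u :: "real \<Rightarrow> real \<Rightarrow> real" and Dx Dy :: "nat \<Rightarrow> real \<Rightarrow> real \<Rightarrow> real"
  assumes "a < b" and "c < d" and "0 < \<gamma>" and "\<gamma> < 1" and "0 < Mx" and "0 < My"
    and xi: "xi \<in> {a..b}" and yj: "yj \<in> {c..d}"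
    and u: "continuous_on ({a..b} \<times> {c..d}) (\<lambda>z. u (fst z) (snd z))"
    and Dx0: "Dx 0 = u"
    and Dx: "\<And>m x y. m < 4 \<Longrightarrow> x \<in> {a..b} \<Longrightarrow> y \<in> {c..d} \<Longrightarrow>
      ((\<lambda>t. Dx m t y) has_real_derivative Dx (Suc m) x y) (at x within {a..b})"
    and MX: "\<And>x y. x \<in> {a..b} \<Longrightarrow> y \<in> {c..d} \<Longrightarrow> \<bar>Dx 3 x y\<bar> \<le> MX3 \<and> \<bar>Dx 4 x y\<bar> \<le> MX4"
    and Dy0: "Dy 0 = u"
    and Dy: "\<And>m x y. m < 4 \<Longrightarrow> x \<in> {a..b} \<Longrightarrow> y \<in> {c..d} \<Longrightarrow>
      ((\<lambda>t. Dy m x t) has_real_derivative Dy (Suc m) x y) (at y within {c..d})"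
    and MY: "\<And>x y. x \<in> {a..b} \<Longrightarrow> y \<in> {c..d} \<Longrightarrow> \<bar>Dy 3 x y\<bar> \<le> MY3 \<and> \<bar>Dy 4 x y\<bar> \<le> MY4"
  shows "\<bar>integral {c..d} (\<lambda>y. integral {a..b} (\<lambda>x.
      (u x y - uQ u a b c d Mx My x y) * plane_kernel \<gamma> 0 xi yj x y))\<bar>
    \<le> 3 * ((b - a) / real Mx) ^ 4 * (MX3 / 3 + MX4 * (b - a)) * (2 * (d - c) powr (1 - \<gamma>) / (1 - \<gamma>))
      + ((d - c) / real My) ^ 4 * (MY3 / 3 + MY4 * (d - c)) * (2 * (b - a) powr (1 - \<gamma>) / (1 - \<gamma>))"
proof -
  define K where "K x y = plane_kernel \<gamma> 0 xi yj x y" for x y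
  define E where "E x y = u x y - uQ u a b c d Mx My x y" for x y
  define A where "A x y = u x y - quad_interp c d My (u x) y" for x y
  define W where "W = (\<lambda>x y'. u x y' - quad_interp a b Mx (\<lambda>x'. u x' y') x)"
  have E_split: "E x y = A x y + quad_interp c d My (W x) y" for x y
    unfolding E_def A_def W_def by (rule uQ_error_split)
  have E_cont: "continuous_on ({a..b} \<times> {c..d}) (\<lambda>z. E (fst z) (snd z))"
    unfolding E_def by (intro continuous_intros u continuous_on_uQ assms(1,2,5,6))
  have A_cont: "continuous_on ({a..b} \<times> {c..d}) (\<lambda>z. A (fst z) (snd z))"
    unfolding A_def by (intro continuous_intros u continuous_on_quad_interp_snd assms(2,6))
  define FE where "FE y = integral {a..b} (\<lambda>x. E x y * K x y)" for y
  define FA where "FA y = integral {a..b} (\<lambda>x. A x y * K x y)" for y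
  have FE_int: "FE integrable_on {c..d}" and FA_int: "FA integrable_on {c..d}"
    unfolding FE_def FA_def K_def
    using integral_swap_plane_kernel(1)[OF xi yj assms(3,4)] E_cont A_cont by blast+
  have "0 \<le> MX3" "0 \<le> MX4" using MX[of a c] assms(1,2) by force+
  have diff_bound: "\<bar>FE y - FA y\<bar> \<le> 3 * ((b - a) / real Mx) ^ 4 * (MX3 / 3 + MX4 * (b - a)) * \<bar>yj - y\<bar> powr - \<gamma>"
    if "y \<in> {c..d}" "y \<noteq> yj" for y
  proof -
    have K_cont: "continuous_on {a..b} (\<lambda>x. K x y)"
      unfolding K_def plane_kernel_eq_slice_kernel using that(2) by (intro continuous_on_slice_kernel) simp
    have "FE y - FA y = integral {a..b} (\<lambda>x. E x y * K x y - A x y * K x y)"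
      unfolding FE_def FA_def using that(1)
      by (intro integral_diff[symmetric] integrable_continuous_interval continuous_on_mult
          continuous_on_slice[OF E_cont] continuous_on_slice[OF A_cont] K_cont)
    also have "\<dots> = integral {a..b} (\<lambda>x. quad_interp c d My (W x) y * K x y)"
      by (simp add: E_split algebra_simps)
    finally show ?thesis
      using x_interp_error_on_line[OF assms(1-3,5,6) that u Dx0 Dx MX] by (simp add: K_def W_def mult.assoc)
  qed
  have "\<bar>integral {c..d} (\<lambda>y. FE y - FA y)\<bar>
      \<le> 3 * ((b - a) / real Mx) ^ 4 * (MX3 / 3 + MX4 * (b - a)) * (2 * (d - c) powr (1 - \<gamma>) / (1 - \<gamma>))"
    using abs_integral_le_weakly_singular[OF assms(3,4) yj _ integrable_diff[OF FE_int FA_int] diff_bound]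
      \<open>0 \<le> MX3\<close> \<open>0 \<le> MX4\<close> assms(1) by (simp add: mult.assoc)
  moreover have "\<bar>integral {c..d} FA\<bar>
      \<le> ((d - c) / real My) ^ 4 * (MY3 / 3 + MY4 * (d - c)) * (2 * (b - a) powr (1 - \<gamma>) / (1 - \<gamma>))"
    unfolding FA_def K_def A_def
    by (rule iterated_integral_y_interp_error[OF assms(1-4,6) xi yj u Dy0 Dy MY])
  moreover have "integral {c..d} FE = integral {c..d} (\<lambda>y. FE y - FA y) + integral {c..d} FA"
    using integral_diff[OF FE_int FA_int] by simp
  ultimately show ?thesis
    unfolding FE_def E_def K_def by linarith
qed

lemma interior_node_boundary_distance:
  assumes "a < b" and "1 \<le> i" and "i \<le> 2 * M - 1"
  defines "x \<equiv> node a ((b - a) / real M) (real i / 2)"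
  shows "0 < min (x - a) (b - x)" and "min (x - a) (b - x) \<le> (b - a) / 2"
proof -
  have "0 < M" using assms(2,3) by simp
  then have "x - a = real i / 2 * ((b - a) / real M)" "b - x = (real (2 * M) - real i) / 2 * ((b - a) / real M)"
    by (simp_all add: x_def node_def field_simps)
  moreover have "real i < real (2 * M)" using assms(2,3) by linarith
  ultimately show "0 < min (x - a) (b - x)" using assms(1,2) \<open>0 < M\<close> by simp
  show "min (x - a) (b - x) \<le> (b - a) / 2" by (auto simp: min_def)
qed

lemma le_powr_mult_neg_powr:
  fixes h \<eta> L \<gamma> :: real
  assumes "0 < \<eta>" and "\<eta> \<le> L" and "0 \<le> \<gamma>" and "0 \<le> h"
  shows "h \<le> L powr \<gamma> * (h * \<eta> powr (- \<gamma>))"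
proof -
  have "\<eta> powr \<gamma> \<le> L powr \<gamma>" using assms by (intro powr_mono2) auto
  then have "1 \<le> L powr \<gamma> * \<eta> powr (- \<gamma>)"
    using assms(1) by (simp add: powr_minus_divide divide_simps)
  from mult_left_mono[OF this assms(4)] show ?thesis by (simp add: mult_ac)
qed

lemma h4_le_boundary_weighted:
  fixes hx hy \<eta> \<eta>' Lx Ly CX CY \<gamma> :: real
  assumes "0 \<le> CX" "0 \<le> CY" "0 < \<eta>" "\<eta> \<le> Lx" "0 < \<eta>'" "\<eta>' \<le> Ly" "0 \<le> \<gamma>" "0 \<le> hx" "0 \<le> hy"
  shows "CX * hx ^ 4 + CY * hy ^ 4 \<le> (CX * Lx powr \<gamma> + CY * Ly powr \<gamma>)
    * (hx ^ 4 * \<eta> powr (- \<gamma>) + hy ^ 4 * \<eta>' powr (- \<gamma>) + hx powr (5 - \<gamma>) + hy powr (5 - \<gamma>))"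
proof -
  define S where "S = hx ^ 4 * \<eta> powr (- \<gamma>) + hy ^ 4 * \<eta>' powr (- \<gamma>) + hx powr (5 - \<gamma>) + hy powr (5 - \<gamma>)"
  have "hx ^ 4 \<le> Lx powr \<gamma> * S"
    using le_powr_mult_neg_powr[OF assms(3,4,7), of "hx ^ 4"] assms(8)
      mult_left_mono[of "hx ^ 4 * \<eta> powr (- \<gamma>)" S "Lx powr \<gamma>"] by (simp add: S_def)
  moreover have "hy ^ 4 \<le> Ly powr \<gamma> * S"
    using le_powr_mult_neg_powr[OF assms(5,6,7), of "hy ^ 4"] assms(9)
      mult_left_mono[of "hy ^ 4 * \<eta>' powr (- \<gamma>)" S "Ly powr \<gamma>"] by (simp add: S_def)
  ultimately have "CX * hx ^ 4 + CY * hy ^ 4 \<le> CX * (Lx powr \<gamma> * S) + CY * (Ly powr \<gamma> * S)"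
    using assms(1,2) by (intro add_mono mult_left_mono)
  then show ?thesis unfolding S_def[symmetric] by (simp add: algebra_simps)
qed

lemma weighted_interpolation_error_O_h4:
  fixes u :: "real \<Rightarrow> real \<Rightarrow> real"
  assumes "a < b" and "c < d" and "0 < \<gamma>" and "\<gamma> < 1"
    and smooth: "smooth2_on 6 ({a..b} \<times> {c..d}) u"
  obtains CX CY where "0 \<le> CX" and "0 \<le> CY"
    and "\<And>Mx My xi yj. 0 < Mx \<Longrightarrow> 0 < My \<Longrightarrow> xi \<in> {a..b} \<Longrightarrow> yj \<in> {c..d} \<Longrightarrow>
      \<bar>integral {c..d} (\<lambda>y. integral {a..b} (\<lambda>x.
        (u x y - uQ u a b c d Mx My x y) / ((xi - x)\<^sup>2 + (yj - y)\<^sup>2) powr (\<gamma> / 2)))\<bar>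
      \<le> CX * ((b - a) / real Mx) ^ 4 + CY * ((d - c) / real My) ^ 4"
proof -
  have "(6::nat) = 4 + 2" by simp
  with smooth have smooth42: "smooth2_on (4 + 2) ({a..b} \<times> {c..d}) u" by (simp only:)
  obtain Dx where Dx0: "Dx 0 = u"
    and Dx: "\<And>m x y. m < 4 \<Longrightarrow> x \<in> {a..b} \<Longrightarrow> y \<in> {c..d} \<Longrightarrow>
      ((\<lambda>t. Dx m t y) has_real_derivative Dx (Suc m) x y) (at x within {a..b})"
    and Dx_cont: "\<And>m. m \<le> 4 \<Longrightarrow> continuous_on ({a..b} \<times> {c..d}) (\<lambda>p. Dx m (fst p) (snd p))"
    using smooth2_on_rectangle_x_derivatives[OF smooth42] by blast
  obtain Dy where Dy0: "Dy 0 = u"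
    and Dy: "\<And>m x y. m < 4 \<Longrightarrow> x \<in> {a..b} \<Longrightarrow> y \<in> {c..d} \<Longrightarrow>
      ((\<lambda>t. Dy m x t) has_real_derivative Dy (Suc m) x y) (at y within {c..d})"
    and Dy_cont: "\<And>m. m \<le> 4 \<Longrightarrow> continuous_on ({a..b} \<times> {c..d}) (\<lambda>p. Dy m (fst p) (snd p))"
    using smooth2_on_rectangle_y_derivatives[OF smooth42] by blast
  have "3 \<le> (4::nat)" by simp
  obtain MX3 MX4 MY3 MY4 where
    MX: "\<And>x y. x \<in> {a..b} \<Longrightarrow> y \<in> {c..d} \<Longrightarrow> \<bar>Dx 3 x y\<bar> \<le> MX3 \<and> \<bar>Dx 4 x y\<bar> \<le> MX4"
    and MY: "\<And>x y. x \<in> {a..b} \<Longrightarrow> y \<in> {c..d} \<Longrightarrow> \<bar>Dy 3 x y\<bar> \<le> MY3 \<and> \<bar>Dy 4 x y\<bar> \<le> MY4"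
    using continuous_on_rectangle_bounded[OF Dx_cont[OF \<open>3 \<le> 4\<close>]] continuous_on_rectangle_bounded[OF Dx_cont[OF order.refl]]
      continuous_on_rectangle_bounded[OF Dy_cont[OF \<open>3 \<le> 4\<close>]] continuous_on_rectangle_bounded[OF Dy_cont[OF order.refl]]
    by metis
  have "0 \<le> MX3" "0 \<le> MX4" "0 \<le> MY3" "0 \<le> MY4"
    using MX[of a c] MY[of a c] assms(1,2) by force+
  show ?thesis
  proof (rule that)
    show "0 \<le> 3 * (MX3 / 3 + MX4 * (b - a)) * (2 * (d - c) powr (1 - \<gamma>) / (1 - \<gamma>))"
      and "0 \<le> (MY3 / 3 + MY4 * (d - c)) * (2 * (b - a) powr (1 - \<gamma>) / (1 - \<gamma>))"
      using \<open>0 \<le> MX3\<close> \<open>0 \<le> MX4\<close> \<open>0 \<le> MY3\<close> \<open>0 \<le> MY4\<close> assms(1,2,4) by auto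
    fix Mx My :: nat and xi yj :: real
    assume grid: "0 < Mx" "0 < My" "xi \<in> {a..b}" "yj \<in> {c..d}"
    have "(\<lambda>y. integral {a..b} (\<lambda>x. (u x y - uQ u a b c d Mx My x y) / ((xi - x)\<^sup>2 + (yj - y)\<^sup>2) powr (\<gamma> / 2)))
      = (\<lambda>y. integral {a..b} (\<lambda>x. (u x y - uQ u a b c d Mx My x y) * plane_kernel \<gamma> 0 xi yj x y))"
      by (simp add: plane_kernel_def)
    with weighted_interpolation_error_le[OF assms(1-4) grid smooth2_on_continuous_on[OF smooth]
        Dx0 Dx MX Dy0 Dy MY]
    show "\<bar>integral {c..d} (\<lambda>y. integral {a..b} (\<lambda>x.
        (u x y - uQ u a b c d Mx My x y) / ((xi - x)\<^sup>2 + (yj - y)\<^sup>2) powr (\<gamma> / 2)))\<bar>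
      \<le> 3 * (MX3 / 3 + MX4 * (b - a)) * (2 * (d - c) powr (1 - \<gamma>) / (1 - \<gamma>)) * ((b - a) / real Mx) ^ 4
        + (MY3 / 3 + MY4 * (d - c)) * (2 * (b - a) powr (1 - \<gamma>) / (1 - \<gamma>)) * ((d - c) / real My) ^ 4"
      by (simp only: mult_ac)
  qed
qed

theorem lemma3p12:
  fixes a b c d \<gamma> :: real and u :: "real \<Rightarrow> real \<Rightarrow> real"
  assumes "a < b" and "c < d" and "0 < \<gamma>" and "\<gamma> < 1"
    and "smooth2_on 6 ({a..b} \<times> {c..d}) u"
  shows "\<exists>C. \<forall>Mx My i j. 2 \<le> Mx \<longrightarrow> 2 \<le> My \<longrightarrow>
           1 \<le> i \<longrightarrow> i \<le> 2 * Mx - 1 \<longrightarrow> 1 \<le> j \<longrightarrow> j \<le> 2 * My - 1 \<longrightarrow>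
           (let hx = (b - a) / real Mx; hy = (d - c) / real My;
                xi = node a hx (real i / 2); yj = node c hy (real j / 2);
                \<eta> = min (xi - a) (b - xi); \<eta>' = min (yj - c) (d - yj)
            in \<bar>integral {c..d} (\<lambda>y. integral {a..b} (\<lambda>x.
                   (u x y - uQ u a b c d Mx My x y) / ((xi - x)\<^sup>2 + (yj - y)\<^sup>2) powr (\<gamma> / 2)))\<bar>
               \<le> C * (hx ^ 4 * \<eta> powr (- \<gamma>) + hy ^ 4 * \<eta>' powr (- \<gamma>)
                      + hx powr (5 - \<gamma>) + hy powr (5 - \<gamma>)))"
proof -
  obtain CX CY where "0 \<le> CX" "0 \<le> CY" and bound: "\<And>Mx My xi yj. 0 < Mx \<Longrightarrow> 0 < My \<Longrightarrow>
      xi \<in> {a..b} \<Longrightarrow> yj \<in> {c..d} \<Longrightarrow>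
      \<bar>integral {c..d} (\<lambda>y. integral {a..b} (\<lambda>x.
        (u x y - uQ u a b c d Mx My x y) / ((xi - x)\<^sup>2 + (yj - y)\<^sup>2) powr (\<gamma> / 2)))\<bar>
      \<le> CX * ((b - a) / real Mx) ^ 4 + CY * ((d - c) / real My) ^ 4"
    using weighted_interpolation_error_O_h4[OF assms] by blast
  show ?thesis
  proof (intro exI[of _ "CX * ((b - a) / 2) powr \<gamma> + CY * ((d - c) / 2) powr \<gamma>"] allI impI)
    fix Mx My i j :: nat
    assume "2 \<le> Mx" "2 \<le> My" "1 \<le> i" "i \<le> 2 * Mx - 1" "1 \<le> j" "j \<le> 2 * My - 1"
    note \<eta> = interior_node_boundary_distance[OF assms(1) \<open>1 \<le> i\<close> \<open>i \<le> 2 * Mx - 1\<close>]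
      and \<eta>' = interior_node_boundary_distance[OF assms(2) \<open>1 \<le> j\<close> \<open>j \<le> 2 * My - 1\<close>]
    have "node a ((b - a) / real Mx) (real i / 2) \<in> {a..b}" "node c ((d - c) / real My) (real j / 2) \<in> {c..d}"
      using \<eta>(1) \<eta>'(1) by auto
    from order_trans[OF bound[OF _ _ this] h4_le_boundary_weighted[OF \<open>0 \<le> CX\<close> \<open>0 \<le> CY\<close> \<eta> \<eta>']]
    show "let hx = (b - a) / real Mx; hy = (d - c) / real My;
        xi = node a hx (real i / 2); yj = node c hy (real j / 2);
        \<eta> = min (xi - a) (b - xi); \<eta>' = min (yj - c) (d - yj)
      in \<bar>integral {c..d} (\<lambda>y. integral {a..b} (\<lambda>x.
          (u x y - uQ u a b c d Mx My x y) / ((xi - x)\<^sup>2 + (yj - y)\<^sup>2) powr (\<gamma> / 2)))\<bar>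
        \<le> (CX * ((b - a) / 2) powr \<gamma> + CY * ((d - c) / 2) powr \<gamma>) * (hx ^ 4 * \<eta> powr (- \<gamma>)
          + hy ^ 4 * \<eta>' powr (- \<gamma>) + hx powr (5 - \<gamma>) + hy powr (5 - \<gamma>))"
      using \<open>2 \<le> Mx\<close> \<open>2 \<le> My\<close> assms(1-3) by (simp add: Let_def)
  qed
qed

end
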